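(* Let $U$ and $V$ be finite sets and let $E\subseteq U\times U$ and $F\subseteq V\times V$ be symmetric. Then exactly one of the following holds: (1) for all $\alpha\in W(U,E)$ and $\beta\in W(V,F)$, the graphs $(U,\alpha)$ and $(V,\beta)$ are not weakly disjoint; (2) there is a full subset $A\subseteq W(U,E)$ such that for each $\alpha\in A$ there is a full subset $B_\alpha\subseteq W(V,F)$ with $(U,\alpha)$ and $(V,\beta)$ weakly disjoint for every $\beta\in B_\alpha$. The same dichotomy holds with "weakly disjoint" replaced by "strongly disjoint" in both statements.
   Context: A weight function on a finite set $U$ is $\alpha:U\times U\to\mathbb{R}$ with $\alpha\ge0$, symmetric, summing to $1$; degree $p(u)=\sum_{u'}\alpha(u,u')$. A graph is $(U,\alpha)$. $W(U,E)$ is the set of weight functions $\alpha$ on $U$ with $\{(u,u'):\alpha(u,u')>0\}=E$; it is identified with a bounded open subset of $\mathbb{R}^d$, $d$ being the number of unordered pairs $\{u,u'\}$ with $(u,u')\in E$ minus one (coordinates are the weights of the undirected edges, one removed by normalization). If $B\subseteq\mathbb{R}^d$ is bounded and open, a set $A\subseteq B$ is full if it is open and dense in $B$ and has the same $d$-dimensional Lebesgue measure as $B$. For graphs $G=(U,\alpha)$, $H=(V,\beta)$ with degrees $p,q$, a weight joining is a weight function $\gamma$ on $U\times V$ with degree $r(u,v)=\sum_{(u',v')}\gamma((u,v),(u',v'))$ satisfying $\sum_v r(u,v)=p(u)$, $\sum_u r(u,v)=q(v)$, $p(u)\sum_{\tilde v}\gamma((u,v),(u',\tilde v))=\alpha(u,u')r(u,v)$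 and $q(v)\sum_{\tilde u}\gamma((u,v),(\tilde u,v'))=\beta(v,v')r(u,v)$ for all $u,u',v,v'$. $G,H$ are strongly disjoint if the only weight joining is $\alpha\otimes\beta$, $(\alpha\otimes\beta)((u,v),(u',v'))=\alpha(u,u')\beta(v,v')$, and weakly disjoint if every weight joining has degree function $r(u,v)=p(u)q(v)$. *)

theory Defs
  imports "HOL-Analysis.Analysis"
begin

definition weight_fun :: "'s set \<Rightarrow> ('s \<times> 's \<Rightarrow> real) \<Rightarrow> bool" where
  "weight_fun S a \<longleftrightarrow>
     (\<forall>x y. 0 \<le> a (x, y)) \<and> (\<forall>x y. a (x, y) = a (y, x)) \<and>
     (\<forall>x y. (x, y) \<notin> S \<times> S \<longrightarrow> a (x, y) = 0) \<and>
     (\<Sum>z\<in>S \<times> S. a z) = 1"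

definition deg :: "'s set \<Rightarrow> ('s \<times> 's \<Rightarrow> real) \<Rightarrow> 's \<Rightarrow> real" where
  "deg S a x = (\<Sum>y\<in>S. a (x, y))"

definition Wset :: "'u set \<Rightarrow> ('u \<times> 'u) set \<Rightarrow> ('u \<times> 'u \<Rightarrow> real) set" where
  "Wset U E = {a. weight_fun U a \<and> {z. a z > 0} = E}"

text \<open>Undirected edges of E, a distinguished edge removed by normalisation,
  and the coordinate chart W(U,E) \<rightarrow> R^d.\<close>
definition uedges :: "('u \<times> 'u) set \<Rightarrow> 'u set set" where
  "uedges E = {{u, u'} | u u'. (u, u') \<in> E}"

definition removed_edge :: "('u \<times> 'u) set \<Rightarrow> 'u set" where
  "removed_edge E = (SOME e. e \<in> uedges E)"

definition coord_edges :: "('u \<times> 'u) set \<Rightarrow> 'u set set" where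
  "coord_edges E = uedges E - {removed_edge E}"

definition edge_weight :: "('u \<times> 'u \<Rightarrow> real) \<Rightarrow> 'u set \<Rightarrow> real" where
  "edge_weight a e = a (SOME p. e = {fst p, snd p})"

definition chart :: "('u \<times> 'u) set \<Rightarrow> ('u \<times> 'u \<Rightarrow> real) \<Rightarrow> ('u set \<Rightarrow> real)" where
  "chart E a = restrict (edge_weight a) (coord_edges E)"

definition full_in :: "'i set \<Rightarrow> ('i \<Rightarrow> real) set \<Rightarrow> ('i \<Rightarrow> real) set \<Rightarrow> bool" where
  "full_in I B A \<longleftrightarrow>
     A \<subseteq> B \<and>
     openin (product_topology (\<lambda>_. euclideanreal) I) A \<and>
     B \<subseteq> (product_topology (\<lambda>_. euclideanreal) I) closure_of A \<and>
     emeasure (PiM I (\<lambda>_. lborel)) A = emeasure (PiM I (\<lambda>_. lborel)) B"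

definition full_W :: "'u set \<Rightarrow> ('u \<times> 'u) set \<Rightarrow> ('u \<times> 'u \<Rightarrow> real) set \<Rightarrow> bool" where
  "full_W U E A \<longleftrightarrow> A \<subseteq> Wset U E \<and>
     full_in (coord_edges E) (chart E ` Wset U E) (chart E ` A)"

definition weight_joining ::
  "'u set \<Rightarrow> ('u \<times> 'u \<Rightarrow> real) \<Rightarrow> 'v set \<Rightarrow> ('v \<times> 'v \<Rightarrow> real)
    \<Rightarrow> (('u \<times> 'v) \<times> ('u \<times> 'v) \<Rightarrow> real) \<Rightarrow> bool" where
  "weight_joining U a V b g \<longleftrightarrow>
     weight_fun (U \<times> V) g \<and>
     (\<forall>u\<in>U. (\<Sum>v\<in>V. deg (U \<times> V) g (u, v)) = deg U a u) \<and>
     (\<forall>v\<in>V. (\<Sum>u\<in>U. deg (U \<times> V) g (u, v)) = deg V b v) \<and>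
     (\<forall>u\<in>U. \<forall>u'\<in>U. \<forall>v\<in>V.
        deg U a u * (\<Sum>v'\<in>V. g ((u, v), (u', v'))) = a (u, u') * deg (U \<times> V) g (u, v)) \<and>
     (\<forall>v\<in>V. \<forall>v'\<in>V. \<forall>u\<in>U.
        deg V b v * (\<Sum>u'\<in>U. g ((u, v), (u', v'))) = b (v, v') * deg (U \<times> V) g (u, v))"

definition strongly_disjoint ::
  "'u set \<Rightarrow> ('u \<times> 'u \<Rightarrow> real) \<Rightarrow> 'v set \<Rightarrow> ('v \<times> 'v \<Rightarrow> real) \<Rightarrow> bool" where
  "strongly_disjoint U a V b \<longleftrightarrow>
     (\<forall>g. weight_joining U a V b g \<longrightarrow>
        (\<forall>x\<in>U \<times> V. \<forall>y\<in>U \<times> V. g (x, y) = a (fst x, fst y) * b (snd x, snd y)))"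

definition weakly_disjoint ::
  "'u set \<Rightarrow> ('u \<times> 'u \<Rightarrow> real) \<Rightarrow> 'v set \<Rightarrow> ('v \<times> 'v \<Rightarrow> real) \<Rightarrow> bool" where
  "weakly_disjoint U a V b \<longleftrightarrow>
     (\<forall>g. weight_joining U a V b g \<longrightarrow>
        (\<forall>u\<in>U. \<forall>v\<in>V. deg (U \<times> V) g (u, v) = deg U a u * deg V b v))"

end

theory Submission
  imports Defs "HOL-Computational_Algebra.Polynomial" "Jordan_Normal_Form.Determinant"
begin

text \<open>For fixed weights a and b, both weak and strong disjointness say that a homogeneous linear
  system has only the trivial solution. The strong system describes the directions h in which
  a \<otimes> b + \<epsilon> h stays a weight joining; the weak system describes the resulting relative
  deviations of the degree from p \<otimes> q. Turning a nonzero weak solution k back into a joining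
  with the wrong degree uses the averaging operator P of a: if P is not involutive at k an
  explicit correction works, otherwise k splits into eigenfunctions of P for \<plusminus>1, which are
  constant up to sign along edges.

  The coefficients of both systems are polynomials in the chart coordinates of a and b, so
  disjointness holds exactly where a Gram determinant D(a, b) is nonzero. D is a polynomial in
  the coordinates of a for fixed b and vice versa, and the zero set of a nonzero polynomial is
  closed and null. Hence either D vanishes on all of W(U, E) \<times> W(V, F), or its nonvanishing
  locus provides the required full sets.\<close>

section \<open>Polynomial functions of finitely many real coordinates\<close>

inductive_set polyfun :: "'i set \<Rightarrow> (('i \<Rightarrow> real) \<Rightarrow> real) set" for I where
  polyfun_const: "(\<lambda>_. c) \<in> polyfun I"
| polyfun_coord: "i \<in> I \<Longrightarrow> (\<lambda>x. x i) \<in> polyfun I"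
| polyfun_add: "f \<in> polyfun I \<Longrightarrow> g \<in> polyfun I \<Longrightarrow> (\<lambda>x. f x + g x) \<in> polyfun I"
| polyfun_mult: "f \<in> polyfun I \<Longrightarrow> g \<in> polyfun I \<Longrightarrow> (\<lambda>x. f x * g x) \<in> polyfun I"

lemma polyfun_diff: "f \<in> polyfun I \<Longrightarrow> g \<in> polyfun I \<Longrightarrow> (\<lambda>x. f x - g x) \<in> polyfun I"
  using polyfun_add[OF _ polyfun_mult[OF polyfun_const[of "-1"]], of f I g] by simp

lemma polyfun_divide_const: "f \<in> polyfun I \<Longrightarrow> (\<lambda>x. f x / c) \<in> polyfun I"
  using polyfun_mult[OF _ polyfun_const[of "1/c"], of f] by simp

lemma polyfun_sum:
  "finite S \<Longrightarrow> (\<And>s. s \<in> S \<Longrightarrow> (\<lambda>x. f x s) \<in> polyfun I) \<Longrightarrow> (\<lambda>x. \<Sum>s\<in>S. f x s) \<in> polyfun I"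
  by (induction S rule: finite_induct) (simp_all add: polyfun_const polyfun_add)

lemma polyfun_prod:
  "finite S \<Longrightarrow> (\<And>s. s \<in> S \<Longrightarrow> (\<lambda>x. f x s) \<in> polyfun I) \<Longrightarrow> (\<lambda>x. \<Prod>s\<in>S. f x s) \<in> polyfun I"
  by (induction S rule: finite_induct) (simp_all add: polyfun_const polyfun_mult)

lemma polyfun_cong: "f \<in> polyfun I \<Longrightarrow> (\<And>i. i \<in> I \<Longrightarrow> x i = y i) \<Longrightarrow> f x = f y"
  by (induction f rule: polyfun.induct) auto

lemma continuous_map_polyfun:
  "f \<in> polyfun I \<Longrightarrow> continuous_map (product_topology (\<lambda>_. euclideanreal) I) euclideanreal f"
proof (induction f rule: polyfun.induct)
  case (polyfun_coord i)
  then show ?case by (metis continuous_map_product_coordinates)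
qed (auto intro: continuous_map_add continuous_map_real_mult)

lemma borel_measurable_polyfun: "f \<in> polyfun I \<Longrightarrow> f \<in> borel_measurable (PiM I (\<lambda>_. lborel))"
  by (induction f rule: polyfun.induct) (auto simp: measurable_component_singleton)

lemma polyfun_insert_coeffs:
  assumes "f \<in> polyfun (insert i J)" "i \<notin> J"
  obtains P where "\<And>n. (\<lambda>x. coeff (P x) n) \<in> polyfun J" "\<And>x y. f (x(i := y)) = poly (P x) y"
proof -
  have "\<exists>P. (\<forall>n. (\<lambda>x. coeff (P x) n) \<in> polyfun J) \<and> (\<forall>x y. f (x(i := y)) = poly (P x) y)"
    using assms(1)
  proof (induction f rule: polyfun.induct)
    case (polyfun_const c)
    show ?case
      by (rule exI[of _ "\<lambda>x. [:c:]"]) (auto simp: coeff_pCons split: nat.splits intro: polyfun.intros)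
  next
    case (polyfun_coord j)
    show ?case
    proof (cases "j = i")
      case True
      show ?thesis
        by (rule exI[of _ "\<lambda>x. [:0, 1:]"])
           (auto simp: True coeff_pCons split: nat.splits intro: polyfun.intros)
    next
      case False
      with polyfun_coord have "(\<lambda>x. coeff [:x j:] n) \<in> polyfun J" for n
        by (cases n) (auto intro: polyfun.intros)
      with False show ?thesis by (intro exI[of _ "\<lambda>x. [:x j:]"]) auto
    qed
  next
    case (polyfun_add f g)
    then obtain P Q where P: "\<forall>n. (\<lambda>x. coeff (P x) n) \<in> polyfun J" "\<forall>x y. f (x(i := y)) = poly (P x) y"
      and Q: "\<forall>n. (\<lambda>x. coeff (Q x) n) \<in> polyfun J" "\<forall>x y. g (x(i := y)) = poly (Q x) y" by blast
    show ?case
    proof (intro exI[of _ "\<lambda>x. P x + Q x"] conjI allI)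
      show "(\<lambda>x. coeff (P x + Q x) n) \<in> polyfun J" for n
        unfolding coeff_add by (rule polyfun.polyfun_add[OF P(1)[rule_format] Q(1)[rule_format]])
      show "f (x(i := y)) + g (x(i := y)) = poly (P x + Q x) y" for x y using P(2) Q(2) by simp
    qed
  next
    case (polyfun_mult f g)
    then obtain P Q where P: "\<forall>n. (\<lambda>x. coeff (P x) n) \<in> polyfun J" "\<forall>x y. f (x(i := y)) = poly (P x) y"
      and Q: "\<forall>n. (\<lambda>x. coeff (Q x) n) \<in> polyfun J" "\<forall>x y. g (x(i := y)) = poly (Q x) y" by blast
    show ?case
    proof (intro exI[of _ "\<lambda>x. P x * Q x"] conjI allI)
      show "(\<lambda>x. coeff (P x * Q x) n) \<in> polyfun J" for n
        using P(1) Q(1) by (auto simp: coeff_mult intro!: polyfun_sum polyfun.polyfun_mult)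
      show "f (x(i := y)) * g (x(i := y)) = poly (P x * Q x) y" for x y using P(2) Q(2) by simp
    qed
  qed
  with that show thesis by blast
qed

text \<open>By Fubini and induction on the number of coordinates: for almost every value of the
  other coordinates some coefficient in x i is nonzero, and then only finitely many
  values of x i are zeros.\<close>
lemma null_sets_polyfun_zeros:
  assumes "finite I" "f \<in> polyfun I" "f x0 \<noteq> 0"
  shows "{x \<in> space (PiM I (\<lambda>_. lborel)). f x = 0} \<in> null_sets (PiM I (\<lambda>_. lborel))"
  using assms
proof (induction I arbitrary: f x0 rule: finite_induct)
  case empty
  have eq: "{x \<in> space (PiM {} (\<lambda>_. lborel)). f x = 0} = {}"
  proof safe
    fix x assume "x \<in> space (PiM {} (\<lambda>_. lborel :: real measure))" "f x = 0"
    moreover have "f x = f x0" using polyfun_cong[OF empty(1)] by auto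
    ultimately show "x \<in> {}" using empty by simp
  qed
  show ?case by (subst eq) simp
next
  case (insert i J)
  interpret product_sigma_finite "\<lambda>_. lborel :: real measure" by standard
  obtain P where P: "\<And>n. (\<lambda>x. coeff (P x) n) \<in> polyfun J" "\<And>x y. f (x(i := y)) = poly (P x) y"
    using polyfun_insert_coeffs[OF insert(4) insert(2)] by blast
  have "poly (P x0) (x0 i) \<noteq> 0" using P(2)[of x0 "x0 i"] insert(5) by simp
  then have "P x0 \<noteq> 0" by auto
  then obtain n where n: "coeff (P x0) n \<noteq> 0" by (metis leading_coeff_0_iff)
  define N where "N = {x \<in> space (PiM J (\<lambda>_. lborel)). coeff (P x) n = 0}"
  have Nnull: "N \<in> null_sets (PiM J (\<lambda>_. lborel))"
    unfolding N_def using insert.IH[OF P(1)[of n] n] .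
  define Z where "Z = {x \<in> space (PiM (insert i J) (\<lambda>_. lborel)). f x = 0}"
  have "f \<in> borel_measurable (PiM (insert i J) (\<lambda>_. lborel))"
    by (rule borel_measurable_polyfun[OF insert(4)])
  then have Zm: "Z \<in> sets (PiM (insert i J) (\<lambda>_. lborel))" unfolding Z_def by measurable
  have "emeasure (PiM (insert i J) (\<lambda>_. lborel)) Z = (\<integral>\<^sup>+ x. indicator Z x \<partial>(PiM (insert i J) (\<lambda>_. lborel)))"
    using Zm by simp
  also have "\<dots> = (\<integral>\<^sup>+ x. (\<integral>\<^sup>+ y. indicator Z (x(i := y)) \<partial>lborel) \<partial>(PiM J (\<lambda>_. lborel)))"
    using Zm by (intro product_nn_integral_insert) (auto simp: insert)
  also have "\<dots> = (\<integral>\<^sup>+ x. 0 \<partial>(PiM J (\<lambda>_. lborel :: real measure)))"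
  proof (intro nn_integral_cong_AE)
    have "AE x in PiM J (\<lambda>_. lborel). x \<notin> N" using Nnull by (rule AE_not_in)
    moreover have "AE x in PiM J (\<lambda>_. lborel). x \<in> space (PiM J (\<lambda>_. lborel))" by (rule AE_space)
    ultimately show "AE x in PiM J (\<lambda>_. lborel). (\<integral>\<^sup>+ y. indicator Z (x(i := y)) \<partial>lborel) = 0"
    proof eventually_elim
      case (elim x)
      then have "P x \<noteq> 0" by (auto simp: N_def)
      then have fin: "finite {y. poly (P x) y = 0}" by (rule poly_roots_finite)
      have "(\<integral>\<^sup>+ y. indicator Z (x(i := y)) \<partial>lborel) \<le> (\<integral>\<^sup>+ y. indicator {y. poly (P x) y = 0} y \<partial>lborel)"
        by (intro nn_integral_mono) (auto simp: Z_def P(2) split: split_indicator)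
      also have "\<dots> = emeasure lborel {y. poly (P x) y = 0}"
        using null_setsD2[OF finite_imp_null_set_lborel[OF fin]] by simp
      also have "\<dots> = 0" using finite_imp_null_set_lborel[OF fin] by auto
      finally show ?case by simp
    qed
  qed
  also have "\<dots> = 0" by simp
  finally show ?case using Zm unfolding Z_def by (auto simp: null_sets_def)
qed

section \<open>Full sets\<close>

lemma openin_product_topology_contains_cube:
  assumes "finite I" "openin (product_topology (\<lambda>_. euclideanreal) I) S" "x \<in> S"
  obtains d where "d > 0" "PiE I (\<lambda>i. {x i - d <..< x i + d}) \<subseteq> S"
proof -
  obtain W where W: "\<forall>i\<in>I. openin euclideanreal (W i)" "x \<in> PiE I W" "PiE I W \<subseteq> S"
    using assms(2,3) unfolding openin_product_topology_alt by metis
  have "\<forall>i\<in>I. \<exists>e>0. ball (x i) e \<subseteq> W i"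
    using W(1,2) by (auto simp: PiE_def Pi_def open_contains_ball)
  then obtain e where e: "\<forall>i\<in>I. e i > 0 \<and> ball (x i) (e i) \<subseteq> W i" by metis
  define d where "d = (if I = {} then 1 else Min (e ` I))"
  have "d > 0" using e assms(1) by (auto simp: d_def)
  moreover have "d \<le> e i" if "i \<in> I" for i using that assms(1) by (auto simp: d_def)
  then have "{x i - d <..< x i + d} \<subseteq> W i" if "i \<in> I" for i
    using e that by (force simp: ball_def dist_real_def)
  then have "PiE I (\<lambda>i. {x i - d <..< x i + d}) \<subseteq> S" using W(3) by (blast dest: PiE_mono)
  ultimately show thesis by (rule that)
qed

lemma emeasure_cube_pos:
  fixes d :: real
  assumes "finite I" "d > 0"
  shows "emeasure (PiM I (\<lambda>_. lborel)) (PiE I (\<lambda>i. {x i - d <..< x i + d})) > 0"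
proof -
  interpret product_sigma_finite "\<lambda>_. lborel :: real measure" ..
  have "emeasure (PiM I (\<lambda>_. lborel)) (PiE I (\<lambda>i. {x i - d <..< x i + d})) = ennreal ((2 * d) ^ card I)"
    using assms by (subst emeasure_PiM) (auto simp: ennreal_power)
  then show ?thesis using assms by simp
qed

text \<open>The zero set of f is closed, and it is null, so it contains no cube: its complement is
  dense as well as open.\<close>
lemma full_in_polyfun_nonzero:
  assumes I: "finite I" and open_Om: "openin (product_topology (\<lambda>_. euclideanreal) I) Om"
    and Om: "Om \<in> sets (PiM I (\<lambda>_. lborel))" and f: "f \<in> polyfun I" "f x0 \<noteq> 0"
  shows "full_in I Om (Om \<inter> {x. f x \<noteq> 0})"
proof -
  let ?T = "product_topology (\<lambda>_. euclideanreal) I"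
  let ?M = "PiM I (\<lambda>_. lborel :: real measure)"
  define Z where "Z = {x \<in> space ?M. f x = 0}"
  have Z: "Z \<in> null_sets ?M" unfolding Z_def using null_sets_polyfun_zeros[OF I f] .
  have Om_sub: "Om \<subseteq> topspace ?T" using open_Om by (rule openin_subset)
  have Om_diff: "Om \<inter> {x. f x \<noteq> 0} = Om - Z" using Om_sub by (auto simp: Z_def space_PiM)
  have "openin ?T {x \<in> topspace ?T. f x \<in> - {0}}"
    by (rule openin_continuous_map_preimage[OF continuous_map_polyfun[OF f(1)]]) auto
  then have "openin ?T (Om \<inter> {x \<in> topspace ?T. f x \<in> - {0}})" by (rule openin_Int[OF open_Om])
  moreover have "Om \<inter> {x \<in> topspace ?T. f x \<in> - {0}} = Om \<inter> {x. f x \<noteq> 0}" using Om_sub by auto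
  ultimately have open_nonzero: "openin ?T (Om \<inter> {x. f x \<noteq> 0})" by simp
  have dense_nonzero: "Om \<subseteq> ?T closure_of (Om \<inter> {x. f x \<noteq> 0})"
  proof
    fix x assume x: "x \<in> Om"
    show "x \<in> ?T closure_of (Om \<inter> {x. f x \<noteq> 0})"
      unfolding in_closure_of
    proof (intro conjI allI impI)
      show "x \<in> topspace ?T" using x Om_sub by auto
      fix T assume T: "x \<in> T \<and> openin ?T T"
      then obtain d where d: "d > 0" "PiE I (\<lambda>i. {x i - d <..< x i + d}) \<subseteq> T \<inter> Om"
        using openin_product_topology_contains_cube[OF I, of "T \<inter> Om" x] open_Om x by blast
      show "\<exists>y. y \<in> Om \<inter> {x. f x \<noteq> 0} \<and> y \<in> T"
      proof (rule ccontr)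
        assume "\<not> ?thesis"
        then have "PiE I (\<lambda>i. {x i - d <..< x i + d}) \<subseteq> Z"
          using d(2) Om_sub unfolding Z_def by (force simp: space_PiM)
        then have "emeasure ?M (PiE I (\<lambda>i. {x i - d <..< x i + d})) \<le> emeasure ?M Z"
          using Z by (intro emeasure_mono) auto
        then show False using emeasure_cube_pos[OF I d(1), of x] null_setsD1[OF Z] by simp
      qed
    qed
  qed
  have "emeasure ?M (Om \<inter> {x. f x \<noteq> 0}) = emeasure ?M Om"
    unfolding Om_diff using Z Om by (rule emeasure_Diff_null_set)
  with open_nonzero dense_nonzero show ?thesis by (auto simp: full_in_def)
qed

section \<open>The chart of W(U, E)\<close>

lemma uedges_eq_image: "uedges E = (\<lambda>z. {fst z, snd z}) ` E"
  unfolding uedges_def by force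

lemma card_uedge_pos: "e \<in> uedges E \<Longrightarrow> card e > 0"
  by (auto simp: uedges_def card_gt_0_iff)

lemma edge_weight_doubleton:
  assumes "\<And>x y. a (x, y) = a (y, x)"
  shows "edge_weight a {u, v} = a (u, v)"
proof -
  have "\<exists>p. {u, v} = {fst p, snd p}" by (rule exI[of _ "(u, v)"]) simp
  then have "{u, v} = {fst (SOME p. {u, v} = {fst p, snd p}), snd (SOME p. {u, v} = {fst p, snd p})}"
    by (rule someI_ex)
  moreover obtain s t where st: "(SOME p. {u, v} = {fst p, snd p}) = (s, t)" by fastforce
  ultimately have "(u = s \<and> v = t) \<or> (u = t \<and> v = s)" by (simp add: doubleton_eq_iff)
  then show ?thesis unfolding edge_weight_def st using assms by auto
qed

text \<open>Inverse of the chart. The weight of the removed edge is recovered from the normalisation,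
  in which an undirected edge e carries the weight card e times (once for a loop, twice otherwise).\<close>
definition unchart :: "('u \<times> 'u) set \<Rightarrow> ('u set \<Rightarrow> real) \<Rightarrow> 'u \<times> 'u \<Rightarrow> real" where
  "unchart E x z =
     (if z \<notin> E then 0
      else if {fst z, snd z} = removed_edge E
        then (1 - (\<Sum>e\<in>coord_edges E. real (card e) * x e)) / real (card (removed_edge E))
      else x {fst z, snd z})"

definition coord_simplex :: "('u \<times> 'u) set \<Rightarrow> ('u set \<Rightarrow> real) set" where
  "coord_simplex E = {x \<in> PiE (coord_edges E) (\<lambda>_. UNIV).
     (\<forall>e\<in>coord_edges E. 0 < x e) \<and> (\<Sum>e\<in>coord_edges E. real (card e) * x e) < 1}"

locale edge_support =
  fixes U :: "'u set" and E :: "('u \<times> 'u) set"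
  assumes finite_U: "finite U" and E_subset: "E \<subseteq> U \<times> U" and sym_E: "sym E"
    and E_nonempty: "E \<noteq> {}"
begin

lemma finite_E: "finite E"
  using finite_subset[OF E_subset] finite_U by auto

lemma finite_uedges: "finite (uedges E)"
  using finite_E by (simp add: uedges_eq_image)

lemma removed_edge_in_uedges: "removed_edge E \<in> uedges E"
proof -
  from E_nonempty have "\<exists>e. e \<in> uedges E" by (auto simp: uedges_eq_image)
  then show ?thesis unfolding removed_edge_def by (rule someI_ex)
qed

lemma finite_coord_edges: "finite (coord_edges E)"
  using finite_uedges by (simp add: coord_edges_def)

lemma sum_uedges_split: "(\<Sum>e\<in>uedges E. g e) = g (removed_edge E) + (\<Sum>e\<in>coord_edges E. g e)"
  unfolding coord_edges_def using finite_uedges removed_edge_in_uedges by (simp add: sum.remove)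

lemma sum_E_eq_sum_uedges: "(\<Sum>z\<in>E. g {fst z, snd z}) = (\<Sum>e\<in>uedges E. real (card e) * g e)"
proof -
  have "(\<Sum>z\<in>E. g {fst z, snd z}) =
      (\<Sum>e\<in>uedges E. \<Sum>z\<in>{z \<in> E. {fst z, snd z} = e}. g {fst z, snd z})"
    unfolding uedges_eq_image by (rule sum.image_gen[OF finite_E])
  also have "\<dots> = (\<Sum>e\<in>uedges E. real (card e) * g e)"
  proof (rule sum.cong[OF refl])
    fix e assume "e \<in> uedges E"
    then obtain u v where uv: "(u, v) \<in> E" "e = {u, v}" by (auto simp: uedges_def)
    then have "(v, u) \<in> E" using sym_E by (auto simp: sym_def)
    with uv have "{z \<in> E. {fst z, snd z} = e} = {(u, v), (v, u)}" by (auto simp: doubleton_eq_iff)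
    moreover have "card {(u, v), (v, u)} = card {u, v}" by (cases "u = v") auto
    ultimately show "(\<Sum>z\<in>{z \<in> E. {fst z, snd z} = e}. g {fst z, snd z}) = real (card e) * g e"
      using uv(2) by (subst sum.cong[of _ _ _ "\<lambda>_. g e"]) (auto simp: insert_commute)
  qed
  finally show ?thesis .
qed

lemma Wset_nonneg: "a \<in> Wset U E \<Longrightarrow> a z \<ge> 0"
  by (cases z) (auto simp: Wset_def weight_fun_def)

lemma Wset_sym: "a \<in> Wset U E \<Longrightarrow> a (x, y) = a (y, x)"
  by (auto simp: Wset_def weight_fun_def)

lemma Wset_pos_iff: "a \<in> Wset U E \<Longrightarrow> a z > 0 \<longleftrightarrow> z \<in> E"
  by (auto simp: Wset_def)

lemma Wset_eq_0: "a \<in> Wset U E \<Longrightarrow> z \<notin> E \<Longrightarrow> a z = 0"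
  using Wset_nonneg Wset_pos_iff by (metis less_eq_real_def)

lemma Wset_sum_E: "a \<in> Wset U E \<Longrightarrow> (\<Sum>z\<in>E. a z) = 1"
proof -
  assume a: "a \<in> Wset U E"
  have "(\<Sum>z\<in>U \<times> U. a z) = (\<Sum>z\<in>E. a z)"
    using E_subset finite_U Wset_eq_0[OF a] by (intro sum.mono_neutral_right) auto
  then show ?thesis using a by (simp add: Wset_def weight_fun_def)
qed

lemma sum_uedges_edge_weight:
  assumes "a \<in> Wset U E"
  shows "(\<Sum>e\<in>uedges E. real (card e) * edge_weight a e) = 1"
proof -
  have "(\<Sum>z\<in>E. edge_weight a {fst z, snd z}) = (\<Sum>z\<in>E. a z)"
    using edge_weight_doubleton[where a = a, OF Wset_sym[OF assms]] by simp
  then show ?thesis using sum_E_eq_sum_uedges Wset_sum_E[OF assms] by simp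
qed

lemma unchart_in_Wset:
  assumes "x \<in> coord_simplex E"
  shows "unchart E x \<in> Wset U E"
proof -
  let ?e0 = "removed_edge E"
  have pos: "unchart E x z > 0 \<longleftrightarrow> z \<in> E" for z
    using assms card_uedge_pos[OF removed_edge_in_uedges]
    by (auto simp: unchart_def coord_simplex_def coord_edges_def uedges_eq_image)
  have "(\<Sum>z\<in>U \<times> U. unchart E x z) = (\<Sum>z\<in>E. unchart E x z)"
    using E_subset finite_U by (intro sum.mono_neutral_right) (auto simp: unchart_def)
  also have "\<dots> = (\<Sum>e\<in>uedges E. real (card e) *
      (if e = ?e0 then (1 - (\<Sum>e\<in>coord_edges E. real (card e) * x e)) / real (card ?e0) else x e))"
    by (subst sum_E_eq_sum_uedges[symmetric]) (auto simp: unchart_def intro!: sum.cong)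
  also have "\<dots> = 1"
    using card_uedge_pos[OF removed_edge_in_uedges]
    by (simp add: sum_uedges_split) (simp add: coord_edges_def)
  finally have "(\<Sum>z\<in>U \<times> U. unchart E x z) = 1" .
  moreover have "unchart E x (u, v) = unchart E x (v, u)" for u v
    using sym_E by (auto simp: unchart_def sym_def insert_commute)
  moreover have "unchart E x z \<ge> 0" for z
  proof (cases "z \<in> E")
    case True
    then show ?thesis using pos[of z] by linarith
  qed (simp add: unchart_def)
  ultimately show ?thesis
    using E_subset pos by (auto simp: Wset_def weight_fun_def unchart_def)
qed

lemma chart_unchart:
  assumes "x \<in> coord_simplex E"
  shows "chart E (unchart E x) = x"
proof
  fix e
  show "chart E (unchart E x) e = x e"
  proof (cases "e \<in> coord_edges E")
    case True
    then obtain u v where uv: "(u, v) \<in> E" "e = {u, v}" "e \<noteq> removed_edge E"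
      by (auto simp: coord_edges_def uedges_def)
    have "unchart E x (u, v) = unchart E x (v, u)" for u v
      using sym_E by (auto simp: unchart_def sym_def insert_commute)
    then have "edge_weight (unchart E x) {u, v} = unchart E x (u, v)"
      by (rule edge_weight_doubleton)
    with True uv show ?thesis by (simp add: chart_def unchart_def)
  next
    case False
    then show ?thesis using assms by (auto simp: chart_def coord_simplex_def PiE_def extensional_def)
  qed
qed

lemma unchart_chart:
  assumes a: "a \<in> Wset U E"
  shows "unchart E (chart E a) = a"
proof
  fix z
  show "unchart E (chart E a) z = a z"
  proof (cases "z \<in> E")
    case True
    obtain u v where z: "z = (u, v)" by fastforce
    have a_uv: "edge_weight a {u, v} = a (u, v)" by (rule edge_weight_doubleton[where a = a, OF Wset_sym[OF a]])
    show ?thesis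
    proof (cases "{u, v} = removed_edge E")
      case True
      have "(\<Sum>e\<in>coord_edges E. real (card e) * chart E a e) = (\<Sum>e\<in>coord_edges E. real (card e) * edge_weight a e)"
        by (auto simp: chart_def intro!: sum.cong)
      moreover have "real (card (removed_edge E)) * edge_weight a (removed_edge E)
          + (\<Sum>e\<in>coord_edges E. real (card e) * edge_weight a e) = 1"
        using sum_uedges_edge_weight[OF a] unfolding sum_uedges_split .
      ultimately show ?thesis using True \<open>z \<in> E\<close> z a_uv card_uedge_pos[OF removed_edge_in_uedges]
        by (simp add: unchart_def field_simps)
    next
      case False
      then have "{u, v} \<in> coord_edges E" using \<open>z \<in> E\<close> z by (auto simp: coord_edges_def uedges_def)
      with False \<open>z \<in> E\<close> z a_uv show ?thesis by (simp add: unchart_def chart_def)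
    qed
  qed (simp add: unchart_def Wset_eq_0[OF a])
qed

lemma chart_Wset: "chart E ` Wset U E = coord_simplex E"
proof
  show "chart E ` Wset U E \<subseteq> coord_simplex E"
  proof
    fix x assume "x \<in> chart E ` Wset U E"
    then obtain a where a: "a \<in> Wset U E" and x: "x = chart E a" by auto
    have pos: "edge_weight a e > 0" if "e \<in> uedges E" for e
      using that edge_weight_doubleton[where a = a, OF Wset_sym[OF a]] Wset_pos_iff[OF a]
      unfolding uedges_def by auto
    have "real (card (removed_edge E)) * edge_weight a (removed_edge E)
        + (\<Sum>e\<in>coord_edges E. real (card e) * edge_weight a e) = 1"
      using sum_uedges_edge_weight[OF a] unfolding sum_uedges_split .
    moreover have "real (card (removed_edge E)) * edge_weight a (removed_edge E) > 0"
      using pos[OF removed_edge_in_uedges] card_uedge_pos[OF removed_edge_in_uedges] by simp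
    moreover have "(\<Sum>e\<in>coord_edges E. real (card e) * x e) = (\<Sum>e\<in>coord_edges E. real (card e) * edge_weight a e)"
      using x by (auto simp: chart_def intro!: sum.cong)
    ultimately show "x \<in> coord_simplex E" using x pos
      by (auto simp: coord_simplex_def chart_def coord_edges_def)
  qed
  show "coord_simplex E \<subseteq> chart E ` Wset U E"
    using chart_unchart unchart_in_Wset by (metis image_eqI subsetI)
qed

lemma polyfun_unchart: "(\<lambda>x. unchart E x z) \<in> polyfun (coord_edges E)"
proof (cases "z \<in> E")
  case True
  show ?thesis
  proof (cases "{fst z, snd z} = removed_edge E")
    case removed: True
    have "(\<lambda>x. (1 - (\<Sum>e\<in>coord_edges E. real (card e) * x e)) / real (card (removed_edge E)))
        \<in> polyfun (coord_edges E)"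
      by (intro polyfun_divide_const polyfun_diff polyfun_const polyfun_sum finite_coord_edges
          polyfun_mult polyfun_coord)
    with True removed show ?thesis by (simp add: unchart_def)
  next
    case False
    with True have "{fst z, snd z} \<in> coord_edges E" by (force simp: coord_edges_def uedges_def)
    with True False show ?thesis by (simp add: unchart_def polyfun_coord)
  qed
qed (simp add: unchart_def polyfun_const)

lemma openin_coord_simplex: "openin (product_topology (\<lambda>_. euclideanreal) (coord_edges E)) (coord_simplex E)"
proof -
  let ?T = "product_topology (\<lambda>_. euclideanreal) (coord_edges E)"
  let ?m = "\<lambda>x. \<Sum>e\<in>coord_edges E. real (card e) * x e"
  have "?m \<in> polyfun (coord_edges E)"
    by (intro polyfun_sum finite_coord_edges polyfun_mult polyfun_const polyfun_coord)
  then have "openin ?T {x \<in> topspace ?T. ?m x \<in> {..<1}}"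
    by (intro openin_continuous_map_preimage[OF continuous_map_polyfun]) auto
  moreover have "openin ?T ((\<Inter>e\<in>coord_edges E. {x \<in> topspace ?T. x e \<in> {0<..}}) \<inter> topspace ?T)"
    by (intro openin_INT finite_coord_edges
        openin_continuous_map_preimage[OF continuous_map_polyfun[OF polyfun_coord]]) auto
  moreover have "coord_simplex E = ((\<Inter>e\<in>coord_edges E. {x \<in> topspace ?T. x e \<in> {0<..}}) \<inter> topspace ?T)
      \<inter> {x \<in> topspace ?T. ?m x \<in> {..<1}}"
    by (auto simp: coord_simplex_def)
  ultimately show ?thesis by (simp add: openin_Int)
qed

lemma coord_simplex_sets: "coord_simplex E \<in> sets (PiM (coord_edges E) (\<lambda>_. lborel))"
proof -
  let ?m = "\<lambda>x. \<Sum>e\<in>coord_edges E. real (card e) * x e"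
  have "?m \<in> borel_measurable (PiM (coord_edges E) (\<lambda>_. lborel))"
    by (intro borel_measurable_polyfun polyfun_sum finite_coord_edges polyfun_mult polyfun_const polyfun_coord)
  then have "{x \<in> space (PiM (coord_edges E) (\<lambda>_. lborel)). (\<forall>e\<in>coord_edges E. 0 < x e) \<and> ?m x < 1}
      \<in> sets (PiM (coord_edges E) (\<lambda>_. lborel))"
    using finite_coord_edges by measurable
  then show ?thesis by (simp add: coord_simplex_def space_PiM)
qed

lemma Wset_nonempty: "Wset U E \<noteq> {}"
proof -
  define a where "a z = (if z \<in> E then 1 / real (card E) else 0)" for z
  have card_E: "card E > 0" using finite_E E_nonempty by (simp add: card_gt_0_iff)
  have "(\<Sum>z\<in>U \<times> U. a z) = (\<Sum>z\<in>E. a z)"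
    using E_subset finite_U by (intro sum.mono_neutral_right) (auto simp: a_def)
  also have "\<dots> = 1" using card_E by (simp add: a_def)
  finally have "a \<in> Wset U E"
    using E_subset sym_E card_E by (auto simp: Wset_def weight_fun_def a_def sym_def)
  then show ?thesis by auto
qed

lemma full_W_nonempty: "full_W U E A \<Longrightarrow> A \<noteq> {}"
  using Wset_nonempty by (auto simp: full_W_def full_in_def closure_of_empty)

lemma full_W_unchart_nonzero:
  assumes "f \<in> polyfun (coord_edges E)" "f x0 \<noteq> 0"
  shows "full_W U E (unchart E ` (coord_simplex E \<inter> {x. f x \<noteq> 0}))"
proof -
  have "chart E ` unchart E ` (coord_simplex E \<inter> {x. f x \<noteq> 0}) = coord_simplex E \<inter> {x. f x \<noteq> 0}"
    using chart_unchart by (force simp: image_image)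
  moreover have "unchart E ` (coord_simplex E \<inter> {x. f x \<noteq> 0}) \<subseteq> Wset U E"
    using unchart_in_Wset by auto
  ultimately show ?thesis
    using full_in_polyfun_nonzero[OF finite_coord_edges openin_coord_simplex coord_simplex_sets assms]
    by (simp add: full_W_def chart_Wset)
qed

end

section \<open>Gram determinants of linear systems\<close>

definition linear_functional :: "(('x \<Rightarrow> real) \<Rightarrow> real) \<Rightarrow> bool" where
  "linear_functional L \<longleftrightarrow>
     (\<forall>f g. L (\<lambda>z. f z + g z) = L f + L g) \<and> (\<forall>c f. L (\<lambda>z. c * f z) = c * L f)"

lemma linear_functional_sum:
  assumes "linear_functional L" "finite J"
  shows "L (\<lambda>z. \<Sum>j\<in>J. c j * f j z) = (\<Sum>j\<in>J. c j * L (f j))"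
  using assms(2)
proof (induction J rule: finite_induct)
  case empty
  have "\<forall>c f. L (\<lambda>z. c * f z) = c * L f" using assms(1) by (simp add: linear_functional_def)
  from this[rule_format, of 0 "\<lambda>z. 0"] show ?case by simp
next
  case (insert j J)
  then show ?case using assms(1) by (simp add: linear_functional_def)
qed

lemma linear_functional_supported:
  assumes "linear_functional L" "distinct xs" "\<And>z. z \<notin> set xs \<Longrightarrow> k z = 0"
  shows "L k = (\<Sum>j\<in>{0..<length xs}. k (xs ! j) * L (indicator {xs ! j}))"
proof -
  have k_eq: "k = (\<lambda>z. \<Sum>j\<in>{0..<length xs}. k (xs ! j) * indicator {xs ! j} z)"
  proof
    fix z
    show "k z = (\<Sum>j\<in>{0..<length xs}. k (xs ! j) * indicator {xs ! j} z)"
    proof (cases "z \<in> set xs")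
      case True
      then obtain i where i: "i < length xs" "z = xs ! i" by (auto simp: in_set_conv_nth)
      with assms(2) have "(\<Sum>j\<in>{0..<length xs}. k (xs ! j) * indicator {xs ! j} z)
          = (\<Sum>j\<in>{0..<length xs}. if j = i then k z else 0)"
        by (intro sum.cong) (auto simp: nth_eq_iff_index_eq)
      with i show ?thesis by simp
    next
      case False
      then have "indicator {xs ! j} z = (0::real)" if "j < length xs" for j
        using nth_mem[OF that] by (auto simp: indicator_def)
      with False assms(3) show ?thesis by simp
    qed
  qed
  have "L (\<lambda>z. \<Sum>j\<in>{0..<length xs}. k (xs ! j) * indicator {xs ! j} z)
      = (\<Sum>j\<in>{0..<length xs}. k (xs ! j) * L (indicator {xs ! j}))"
    using linear_functional_sum[OF assms(1), of "{0..<length xs}" "\<lambda>j. k (xs ! j)" "\<lambda>j. indicator {xs ! j}"]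
    by simp
  with k_eq show ?thesis by metis
qed

text \<open>With v the coefficient vector of k = (\<Sum>j. v j * indicator {xs ! j}), the quadratic form of
  the Gram matrix is \<Sum>r\<in>R. (L r k)^2; so the Gram matrix is singular iff the
  homogeneous system L r k = 0 has a nonzero solution supported on set xs.\<close>
definition gram :: "'r set \<Rightarrow> ('r \<Rightarrow> ('x \<Rightarrow> real) \<Rightarrow> real) \<Rightarrow> 'x list \<Rightarrow> real mat" where
  "gram R L xs = mat (length xs) (length xs)
     (\<lambda>(i, j). \<Sum>r\<in>R. L r (indicator {xs ! i}) * L r (indicator {xs ! j}))"

lemma gram_mult_vec:
  assumes "i < length xs" "dim_vec v = length xs"
  shows "(gram R L xs *\<^sub>v v) $ i =
    (\<Sum>r\<in>R. L r (indicator {xs ! i}) * (\<Sum>j\<in>{0..<length xs}. L r (indicator {xs ! j}) * v $ j))"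
proof -
  have "(gram R L xs *\<^sub>v v) $ i =
      (\<Sum>j\<in>{0..<length xs}. (\<Sum>r\<in>R. L r (indicator {xs ! i}) * L r (indicator {xs ! j})) * v $ j)"
    using assms by (simp add: gram_def scalar_prod_def)
  also have "\<dots> = (\<Sum>j\<in>{0..<length xs}. \<Sum>r\<in>R. L r (indicator {xs ! i}) * (L r (indicator {xs ! j}) * v $ j))"
    by (simp add: sum_distrib_right mult.assoc)
  also have "\<dots> = (\<Sum>r\<in>R. L r (indicator {xs ! i}) * (\<Sum>j\<in>{0..<length xs}. L r (indicator {xs ! j}) * v $ j))"
    by (subst sum.swap) (simp add: sum_distrib_left)
  finally show ?thesis .
qed

lemma gram_quadratic_form:
  assumes "dim_vec v = length xs"
  shows "v \<bullet> (gram R L xs *\<^sub>v v) = (\<Sum>r\<in>R. (\<Sum>j\<in>{0..<length xs}. L r (indicator {xs ! j}) * v $ j)\<^sup>2)"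
proof -
  define s where "s r = (\<Sum>j\<in>{0..<length xs}. L r (indicator {xs ! j}) * v $ j)" for r
  have "v \<bullet> (gram R L xs *\<^sub>v v) = (\<Sum>i\<in>{0..<length xs}. v $ i * (gram R L xs *\<^sub>v v) $ i)"
    by (simp add: scalar_prod_def gram_def)
  also have "\<dots> = (\<Sum>i\<in>{0..<length xs}. v $ i * (\<Sum>r\<in>R. L r (indicator {xs ! i}) * s r))"
    using assms by (intro sum.cong refl) (simp add: gram_mult_vec s_def)
  also have "\<dots> = (\<Sum>i\<in>{0..<length xs}. \<Sum>r\<in>R. L r (indicator {xs ! i}) * v $ i * s r)"
    by (simp add: sum_distrib_left mult_ac)
  also have "\<dots> = (\<Sum>r\<in>R. (\<Sum>i\<in>{0..<length xs}. L r (indicator {xs ! i}) * v $ i) * s r)"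
    by (subst sum.swap) (simp add: sum_distrib_right)
  also have "\<dots> = (\<Sum>r\<in>R. (s r)\<^sup>2)" by (simp add: s_def power2_eq_square)
  finally show ?thesis by (simp add: s_def)
qed

lemma det_gram_eq_0_imp_solution:
  assumes R: "finite R" and L: "\<And>r. r \<in> R \<Longrightarrow> linear_functional (L r)" and xs: "distinct xs"
    and det: "det (gram R L xs) = 0"
  obtains k z0 where "\<And>z. z \<notin> set xs \<Longrightarrow> k z = 0" "\<And>r. r \<in> R \<Longrightarrow> L r k = 0" "k z0 \<noteq> 0"
proof -
  let ?n = "length xs"
  let ?c = "\<lambda>r j. L r (indicator {xs ! j})"
  have "gram R L xs \<in> carrier_mat ?n ?n" by (simp add: gram_def)
  with det obtain v where v: "v \<in> carrier_vec ?n" "v \<noteq> 0\<^sub>v ?n" "gram R L xs *\<^sub>v v = 0\<^sub>v ?n"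
    using det_0_iff_vec_prod_zero by blast
  define k where "k z = (\<Sum>j\<in>{0..<?n}. v $ j * indicator {xs ! j} z)" for z
  have "(\<Sum>r\<in>R. (\<Sum>j\<in>{0..<?n}. ?c r j * v $ j)\<^sup>2) = 0"
    using gram_quadratic_form[of v xs R L] v by simp
  then have "\<forall>r\<in>R. (\<Sum>j\<in>{0..<?n}. ?c r j * v $ j)\<^sup>2 = 0"
    by (subst (asm) sum_nonneg_eq_0_iff[OF R]) auto
  moreover have "L r k = (\<Sum>j\<in>{0..<?n}. ?c r j * v $ j)" if "r \<in> R" for r
    unfolding k_def
    using linear_functional_sum[OF L[OF that], of "{0..<?n}" "\<lambda>j. v $ j" "\<lambda>j. indicator {xs ! j}"]
    by (simp add: mult.commute)
  ultimately have L_k: "L r k = 0" if "r \<in> R" for r using that by simp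
  obtain i where i: "i < ?n" "v $ i \<noteq> 0"
    using v(1,2) by (metis carrier_vecD eq_vecI index_zero_vec)
  have "k (xs ! i) = (\<Sum>j\<in>{0..<?n}. if j = i then v $ i else 0)"
    unfolding k_def using i(1) xs by (intro sum.cong) (auto simp: nth_eq_iff_index_eq)
  with i have k_i: "k (xs ! i) \<noteq> 0" by simp
  have "k z = 0" if "z \<notin> set xs" for z
    using that nth_mem by (auto simp: k_def intro!: sum.neutral)
  from that[OF this L_k k_i] show thesis .
qed

lemma det_gram_eq_0_if_solution:
  assumes L: "\<And>r. r \<in> R \<Longrightarrow> linear_functional (L r)" and xs: "distinct xs"
    and k: "\<And>z. z \<notin> set xs \<Longrightarrow> k z = 0" "\<And>r. r \<in> R \<Longrightarrow> L r k = 0" "k y \<noteq> 0"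
  shows "det (gram R L xs) = 0"
proof -
  let ?n = "length xs"
  define v where "v = vec ?n (\<lambda>j. k (xs ! j))"
  from k(1,3) obtain i where "i < ?n" "xs ! i = y" by (metis in_set_conv_nth)
  then have "v \<noteq> 0\<^sub>v ?n" using k(3) by (auto simp: v_def vec_eq_iff)
  moreover have "(\<Sum>j\<in>{0..<?n}. L r (indicator {xs ! j}) * v $ j) = 0" if "r \<in> R" for r
    using linear_functional_supported[OF L[OF that] xs k(1)] k(2)[OF that]
    by (simp add: v_def mult.commute)
  then have "gram R L xs *\<^sub>v v = 0\<^sub>v ?n"
    by (intro eq_vecI) (simp_all add: gram_mult_vec v_def, simp add: gram_def)
  moreover have "v \<in> carrier_vec ?n" "gram R L xs \<in> carrier_mat ?n ?n" by (simp_all add: v_def gram_def)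
  ultimately show ?thesis using det_0_iff_vec_prod_zero by blast
qed

lemma det_gram_nonzero_iff:
  assumes "finite R" "\<And>r. r \<in> R \<Longrightarrow> linear_functional (L r)" "distinct xs"
  shows "det (gram R L xs) \<noteq> 0 \<longleftrightarrow>
    (\<forall>k. (\<forall>z. z \<notin> set xs \<longrightarrow> k z = 0) \<and> (\<forall>r\<in>R. L r k = 0) \<longrightarrow> (\<forall>z. k z = 0))"
proof (intro iffI allI impI)
  fix k z assume det: "det (gram R L xs) \<noteq> 0"
    and k: "(\<forall>z. z \<notin> set xs \<longrightarrow> k z = 0) \<and> (\<forall>r\<in>R. L r k = 0)"
  show "k z = 0"
  proof (rule ccontr)
    assume "k z \<noteq> 0"
    have "det (gram R L xs) = 0"
    proof (rule det_gram_eq_0_if_solution[OF assms(2,3)])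
      show "k z' = 0" if "z' \<notin> set xs" for z' using k that by blast
      show "L r k = 0" if "r \<in> R" for r using k that by blast
      show "k z \<noteq> 0" by fact
    qed
    with det show False by simp
  qed
next
  assume trivial: "\<forall>k. (\<forall>z. z \<notin> set xs \<longrightarrow> k z = 0) \<and> (\<forall>r\<in>R. L r k = 0) \<longrightarrow> (\<forall>z. k z = 0)"
  show "det (gram R L xs) \<noteq> 0"
  proof
    assume det: "det (gram R L xs) = 0"
    show False
    proof (rule det_gram_eq_0_imp_solution[OF assms det])
      fix k z0 assume "\<And>z. z \<notin> set xs \<Longrightarrow> k z = 0" "\<And>r. r \<in> R \<Longrightarrow> L r k = 0" "k z0 \<noteq> 0"
      then show False using trivial[rule_format, of k z0] by blast
    qed
  qed
qed

lemma polyfun_det: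
  assumes "\<And>i j. i < n \<Longrightarrow> j < n \<Longrightarrow> (\<lambda>x. g x i j) \<in> polyfun I"
  shows "(\<lambda>x. det (mat n n (\<lambda>(i, j). g x i j))) \<in> polyfun I"
proof -
  have "(\<lambda>x. det (mat n n (\<lambda>(i, j). g x i j))) =
        (\<lambda>x. \<Sum>p\<in>{p. p permutes {0..<n}}. signof p * (\<Prod>i = 0..<n. g x i (p i)))"
  proof
    fix x
    have "det (mat n n (\<lambda>(i, j). g x i j)) = (\<Sum>p\<in>{p. p permutes {0..<n}}. signof p * (\<Prod>i = 0..<n. mat n n (\<lambda>(i, j). g x i j) $$ (i, p i)))"
      by (rule det_def') simp
    also have "\<dots> = (\<Sum>p\<in>{p. p permutes {0..<n}}. signof p * (\<Prod>i = 0..<n. g x i (p i)))"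
      by (intro sum.cong refl arg_cong2[where f="(*)"] prod.cong) (auto simp: permutes_in_image)
    finally show "det (mat n n (\<lambda>(i, j). g x i j)) = (\<Sum>p\<in>{p. p permutes {0..<n}}. signof p * (\<Prod>i = 0..<n. g x i (p i)))" .
  qed
  also have "\<dots> \<in> polyfun I"
    by (intro polyfun_sum polyfun_mult polyfun_const polyfun_prod finite_permutations) (auto simp: assms permutes_in_image)
  finally show ?thesis .
qed

lemma polyfun_det_gram:
  assumes "finite R" "\<And>r f. (\<lambda>x. L x r f) \<in> polyfun I"
  shows "(\<lambda>x. det (gram R (L x) xs)) \<in> polyfun I"
  unfolding gram_def by (intro polyfun_det polyfun_sum polyfun_mult assms)

section \<open>Dichotomy for polynomial conditions\<close>

lemma exists_full_W_polyfun_nonzero: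
  fixes D :: "('u set \<Rightarrow> real) \<Rightarrow> ('v set \<Rightarrow> real) \<Rightarrow> real"
  assumes GE: "edge_support U E" and GF: "edge_support V F"
    and D_poly1: "\<And>y. (\<lambda>x. D x y) \<in> polyfun (coord_edges E)"
    and D_poly2: "\<And>x. (\<lambda>y. D x y) \<in> polyfun (coord_edges F)"
    and D0: "D x0 y0 \<noteq> 0"
  obtains A where "full_W U E A"
    "\<And>a. a \<in> A \<Longrightarrow> \<exists>B. full_W V F B \<and> (\<forall>b\<in>B. D (chart E a) (chart F b) \<noteq> 0)"
proof
  show "full_W U E (unchart E ` (coord_simplex E \<inter> {x. D x y0 \<noteq> 0}))"
    by (rule edge_support.full_W_unchart_nonzero[OF GE D_poly1 D0])
  fix a assume "a \<in> unchart E ` (coord_simplex E \<inter> {x. D x y0 \<noteq> 0})"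
  then obtain x where x: "x \<in> coord_simplex E" "D x y0 \<noteq> 0" "a = unchart E x" by blast
  then have "chart E a = x" using edge_support.chart_unchart[OF GE] by simp
  moreover have "full_W V F (unchart F ` (coord_simplex F \<inter> {y. D x y \<noteq> 0}))"
    by (rule edge_support.full_W_unchart_nonzero[OF GF D_poly2 x(2)])
  moreover have "D x (chart F b) \<noteq> 0" if "b \<in> unchart F ` (coord_simplex F \<inter> {y. D x y \<noteq> 0})" for b
    using that edge_support.chart_unchart[OF GF] by auto
  ultimately show "\<exists>B. full_W V F B \<and> (\<forall>b\<in>B. D (chart E a) (chart F b) \<noteq> 0)" by auto
qed

lemma polyfun_dichotomy:
  fixes P :: "('u \<times> 'u \<Rightarrow> real) \<Rightarrow> ('v \<times> 'v \<Rightarrow> real) \<Rightarrow> bool"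
    and D :: "('u set \<Rightarrow> real) \<Rightarrow> ('v set \<Rightarrow> real) \<Rightarrow> real"
  assumes GE: "edge_support U E" and GF: "edge_support V F"
    and D_poly1: "\<And>y. (\<lambda>x. D x y) \<in> polyfun (coord_edges E)"
    and D_poly2: "\<And>x. (\<lambda>y. D x y) \<in> polyfun (coord_edges F)"
    and P_iff: "\<And>a b. a \<in> Wset U E \<Longrightarrow> b \<in> Wset V F \<Longrightarrow> P a b \<longleftrightarrow> D (chart E a) (chart F b) \<noteq> 0"
  shows "(\<forall>a\<in>Wset U E. \<forall>b\<in>Wset V F. \<not> P a b) \<longleftrightarrow>
          \<not> (\<exists>A. full_W U E A \<and> (\<forall>a\<in>A. \<exists>B. full_W V F B \<and> (\<forall>b\<in>B. P a b)))"
proof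
  assume none: "\<forall>a\<in>Wset U E. \<forall>b\<in>Wset V F. \<not> P a b"
  show "\<not> (\<exists>A. full_W U E A \<and> (\<forall>a\<in>A. \<exists>B. full_W V F B \<and> (\<forall>b\<in>B. P a b)))"
  proof
    assume "\<exists>A. full_W U E A \<and> (\<forall>a\<in>A. \<exists>B. full_W V F B \<and> (\<forall>b\<in>B. P a b))"
    then obtain A a where A: "full_W U E A" "a \<in> A" and "\<exists>B. full_W V F B \<and> (\<forall>b\<in>B. P a b)"
      using edge_support.full_W_nonempty[OF GE] by blast
    then obtain B b where B: "full_W V F B" "b \<in> B" and "P a b"
      using edge_support.full_W_nonempty[OF GF] by blast
    with A none show False by (auto simp: full_W_def)
  qed
next
  assume "\<not> (\<exists>A. full_W U E A \<and> (\<forall>a\<in>A. \<exists>B. full_W V F B \<and> (\<forall>b\<in>B. P a b)))"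
  then show "\<forall>a\<in>Wset U E. \<forall>b\<in>Wset V F. \<not> P a b"
  proof (rule contrapos_np)
    assume "\<not> (\<forall>a\<in>Wset U E. \<forall>b\<in>Wset V F. \<not> P a b)"
    then obtain a0 b0 where "a0 \<in> Wset U E" "b0 \<in> Wset V F" "P a0 b0" by blast
    then have "D (chart E a0) (chart F b0) \<noteq> 0" using P_iff by blast
    then obtain A where A: "full_W U E A"
      and B: "\<And>a. a \<in> A \<Longrightarrow> \<exists>B. full_W V F B \<and> (\<forall>b\<in>B. D (chart E a) (chart F b) \<noteq> 0)"
      using exists_full_W_polyfun_nonzero[OF GE GF D_poly1 D_poly2] by blast
    have "\<exists>B. full_W V F B \<and> (\<forall>b\<in>B. P a b)" if a: "a \<in> A" for a
    proof -
      obtain B where B_full: "full_W V F B" and D_B: "\<And>b. b \<in> B \<Longrightarrow> D (chart E a) (chart F b) \<noteq> 0"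
        using B[OF a] by blast
      have "a \<in> Wset U E" using A a by (auto simp: full_W_def)
      then have "P a b" if "b \<in> B" for b
        using that P_iff D_B B_full by (auto simp: full_W_def)
      with B_full show ?thesis by blast
    qed
    with A show "\<exists>A. full_W U E A \<and> (\<forall>a\<in>A. \<exists>B. full_W V F B \<and> (\<forall>b\<in>B. P a b))" by blast
  qed
qed

text \<open>The Gram determinant of the system serves as the polynomial D of polyfun_dichotomy.\<close>
lemma linear_system_dichotomy:
  fixes P :: "('u \<times> 'u \<Rightarrow> real) \<Rightarrow> ('v \<times> 'v \<Rightarrow> real) \<Rightarrow> bool"
    and L :: "('u \<times> 'u \<Rightarrow> real) \<Rightarrow> ('v \<times> 'v \<Rightarrow> real) \<Rightarrow> 'r \<Rightarrow> ('x \<Rightarrow> real) \<Rightarrow> real"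
  assumes GE: "edge_support U E" and GF: "edge_support V F" and "finite R" "finite X"
    and linear: "\<And>a b r. linear_functional (L a b r)"
    and L_poly1: "\<And>b r f. (\<lambda>x. L (unchart E x) b r f) \<in> polyfun (coord_edges E)"
    and L_poly2: "\<And>a r f. (\<lambda>y. L a (unchart F y) r f) \<in> polyfun (coord_edges F)"
    and P_iff: "\<And>a b. a \<in> Wset U E \<Longrightarrow> b \<in> Wset V F \<Longrightarrow>
      P a b \<longleftrightarrow> (\<forall>k. (\<forall>z. z \<notin> X \<longrightarrow> k z = 0) \<and> (\<forall>r\<in>R. L a b r k = 0) \<longrightarrow> (\<forall>z. k z = 0))"
  shows "(\<forall>a\<in>Wset U E. \<forall>b\<in>Wset V F. \<not> P a b) \<longleftrightarrow>
          \<not> (\<exists>A. full_W U E A \<and> (\<forall>a\<in>A. \<exists>B. full_W V F B \<and> (\<forall>b\<in>B. P a b)))"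
proof -
  obtain xs where xs: "distinct xs" "set xs = X" using finite_distinct_list[OF \<open>finite X\<close>] by blast
  define D where "D x y = det (gram R (L (unchart E x) (unchart F y)) xs)" for x y
  show ?thesis
  proof (rule polyfun_dichotomy[OF GE GF])
    show "(\<lambda>x. D x y) \<in> polyfun (coord_edges E)" for y
      unfolding D_def using \<open>finite R\<close> L_poly1 by (rule polyfun_det_gram)
    show "(\<lambda>y. D x y) \<in> polyfun (coord_edges F)" for x
      unfolding D_def using \<open>finite R\<close> L_poly2 by (rule polyfun_det_gram)
    fix a b assume "a \<in> Wset U E" "b \<in> Wset V F"
    then show "P a b \<longleftrightarrow> D (chart E a) (chart F b) \<noteq> 0"
      unfolding D_def P_iff[OF \<open>a \<in> Wset U E\<close> \<open>b \<in> Wset V F\<close>]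
      by (simp add: edge_support.unchart_chart[OF GE] edge_support.unchart_chart[OF GF]
          det_gram_nonzero_iff[OF \<open>finite R\<close> linear xs(1)] xs(2))
  qed
qed

section \<open>Weighted graphs, tensor products and strong solutions\<close>

lemma deg_add_scaled: "deg S (\<lambda>z. f z + c * h z) x = deg S f x + c * deg S h x"
  by (simp add: deg_def sum.distrib sum_distrib_left)

lemma deg_diff: "deg S (\<lambda>z. f z - h z) x = deg S f x - deg S h x"
  by (simp add: deg_def sum_subtractf)

lemma deg_prod: "deg (U \<times> V) h x = (\<Sum>u'\<in>U. \<Sum>v'\<in>V. h (x, (u', v')))"
  by (simp add: deg_def sum.cartesian_product)

lemma exists_perturbation_nonneg:
  fixes f h :: "'a \<Rightarrow> real"
  assumes "finite X" "\<And>z. z \<in> X \<Longrightarrow> f z > 0"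
  obtains \<epsilon> where "\<epsilon> > 0" "\<And>z. z \<in> X \<Longrightarrow> f z + \<epsilon> * h z \<ge> 0"
proof
  define \<epsilon> where "\<epsilon> = Min (insert 1 ((\<lambda>z. f z / (\<bar>h z\<bar> + 1)) ` X))"
  show "\<epsilon> > 0" using assms by (simp add: \<epsilon>_def)
  fix z assume z: "z \<in> X"
  then have "\<epsilon> \<le> f z / (\<bar>h z\<bar> + 1)" using assms(1) by (simp add: \<epsilon>_def)
  then have "\<epsilon> * \<bar>h z\<bar> \<le> f z / (\<bar>h z\<bar> + 1) * \<bar>h z\<bar>" by (rule mult_right_mono) simp
  also have "\<dots> \<le> f z" using assms(2)[OF z] by (simp add: field_simps)
  moreover have "\<epsilon> * - h z \<le> \<epsilon> * \<bar>h z\<bar>"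
    using mult_left_mono[OF abs_ge_minus_self[of "h z"], of \<epsilon>] \<open>\<epsilon> > 0\<close> by simp
  ultimately show "f z + \<epsilon> * h z \<ge> 0" by linarith
qed

locale weighted_graph = edge_support U E for U :: "'u set" and E +
  fixes w :: "'u \<times> 'u \<Rightarrow> real"
  assumes w_Wset: "w \<in> Wset U E"
begin

lemma weight_nonneg: "w z \<ge> 0"
  by (rule Wset_nonneg[OF w_Wset])

lemma weight_sym: "w (x, y) = w (y, x)"
  by (rule Wset_sym[OF w_Wset])

lemma weight_eq_0: "z \<notin> E \<Longrightarrow> w z = 0"
  by (rule Wset_eq_0[OF w_Wset])

lemma weight_pos_iff: "w z > 0 \<longleftrightarrow> z \<in> E"
  by (rule Wset_pos_iff[OF w_Wset])

lemma weight_outside: "x \<notin> U \<or> y \<notin> U \<Longrightarrow> w (x, y) = 0"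
  using E_subset weight_eq_0 by blast

lemma deg_nonneg: "deg U w u \<ge> 0"
  by (simp add: deg_def sum_nonneg weight_nonneg)

lemma sum_deg: "(\<Sum>u\<in>U. deg U w u) = 1"
  using w_Wset by (simp add: Wset_def weight_fun_def deg_def sum.cartesian_product)

lemma sum_weight_fst: "(\<Sum>u\<in>U. w (u, u')) = deg U w u'"
  by (simp add: deg_def weight_sym)

lemma deg_pos_iff: "deg U w u > 0 \<longleftrightarrow> u \<in> Domain E"
proof
  assume "deg U w u > 0"
  then obtain u' where "w (u, u') \<noteq> 0"
    unfolding deg_def by (metis less_irrefl sum.neutral)
  then show "u \<in> Domain E" using weight_eq_0 by blast
next
  assume "u \<in> Domain E"
  then obtain u' where "(u, u') \<in> E" by blast
  moreover from this have "u' \<in> U" using E_subset by blast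
  ultimately have "0 < w (u, u')" "w (u, u') \<le> deg U w u"
    unfolding deg_def using weight_pos_iff finite_U weight_nonneg by (auto intro: member_le_sum)
  then show "deg U w u > 0" by linarith
qed

lemma deg_eq_0_iff: "deg U w u = 0 \<longleftrightarrow> u \<notin> Domain E"
  using deg_pos_iff[of u] deg_nonneg[of u] by linarith

lemma weight_eq_0_if_deg_eq_0: "deg U w u = 0 \<Longrightarrow> w (u, u') = 0"
  using deg_eq_0_iff weight_eq_0 by blast

end

definition weight_tensor ::
  "('u \<times> 'u \<Rightarrow> real) \<Rightarrow> ('v \<times> 'v \<Rightarrow> real) \<Rightarrow> ('u \<times> 'v) \<times> ('u \<times> 'v) \<Rightarrow> real" where
  "weight_tensor a b z = a (fst (fst z), fst (snd z)) * b (snd (fst z), snd (snd z))"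

lemma weight_tensor_simp: "weight_tensor a b ((u, v), (u', v')) = a (u, u') * b (v, v')"
  by (simp add: weight_tensor_def)

definition tensor_edges :: "('u \<times> 'u) set \<Rightarrow> ('v \<times> 'v) set \<Rightarrow> (('u \<times> 'v) \<times> ('u \<times> 'v)) set" where
  "tensor_edges E F = {((u, v), (u', v')) | u v u' v'. (u, u') \<in> E \<and> (v, v') \<in> F}"

lemma mem_tensor_edges [simp]: "((u, v), (u', v')) \<in> tensor_edges E F \<longleftrightarrow> (u, u') \<in> E \<and> (v, v') \<in> F"
  by (simp add: tensor_edges_def)

text \<open>The equations of weight_joining, linearised at weight_tensor a b and restricted to its
  support: h is a strong solution iff weight_tensor a b + \<epsilon> * h is a weight joining for all
  small \<epsilon> > 0.\<close>
definition strong_solution ::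
  "'u set \<Rightarrow> ('u \<times> 'u) set \<Rightarrow> ('u \<times> 'u \<Rightarrow> real) \<Rightarrow> 'v set \<Rightarrow> ('v \<times> 'v) set \<Rightarrow> ('v \<times> 'v \<Rightarrow> real)
    \<Rightarrow> (('u \<times> 'v) \<times> ('u \<times> 'v) \<Rightarrow> real) \<Rightarrow> bool" where
  "strong_solution U E a V F b h \<longleftrightarrow>
     (\<forall>z. z \<notin> tensor_edges E F \<longrightarrow> h z = 0) \<and>
     (\<forall>x\<in>U \<times> V. \<forall>y\<in>U \<times> V. h (x, y) = h (y, x)) \<and>
     (\<forall>u\<in>U. (\<Sum>v\<in>V. deg (U \<times> V) h (u, v)) = 0) \<and>
     (\<forall>v\<in>V. (\<Sum>u\<in>U. deg (U \<times> V) h (u, v)) = 0) \<and>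
     (\<forall>u\<in>U. \<forall>u'\<in>U. \<forall>v\<in>V.
        deg U a u * (\<Sum>v'\<in>V. h ((u, v), (u', v'))) = a (u, u') * deg (U \<times> V) h (u, v)) \<and>
     (\<forall>v\<in>V. \<forall>v'\<in>V. \<forall>u\<in>U.
        deg V b v * (\<Sum>u'\<in>U. h ((u, v), (u', v'))) = b (v, v') * deg (U \<times> V) h (u, v))"

locale weighted_pair = A: weighted_graph U E a + B: weighted_graph V F b
  for U :: "'u set" and E a and V :: "'v set" and F b
begin

abbreviation "p \<equiv> deg U a"
abbreviation "q \<equiv> deg V b"

lemma tensor_edges_subset: "tensor_edges E F \<subseteq> (U \<times> V) \<times> (U \<times> V)"
  using A.E_subset B.E_subset by (auto simp: tensor_edges_def)

lemma finite_tensor_edges: "finite (tensor_edges E F)"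
  using finite_subset[OF tensor_edges_subset] A.finite_U B.finite_U by blast

lemma weight_tensor_pos_iff: "weight_tensor a b z > 0 \<longleftrightarrow> z \<in> tensor_edges E F"
proof -
  obtain u v u' v' where z: "z = ((u, v), (u', v'))" by (metis prod.collapse)
  show ?thesis
    using A.weight_pos_iff[of "(u, u')"] B.weight_pos_iff[of "(v, v')"]
      A.weight_nonneg[of "(u, u')"] B.weight_nonneg[of "(v, v')"]
    by (auto simp: z weight_tensor_simp zero_less_mult_iff)
qed

lemma weight_tensor_eq_0: "z \<notin> tensor_edges E F \<Longrightarrow> weight_tensor a b z = 0"
  using A.weight_eq_0 B.weight_eq_0 by (cases z) (auto simp: weight_tensor_simp)

lemma weight_tensor_sym: "weight_tensor a b (x, y) = weight_tensor a b (y, x)"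
  by (simp add: weight_tensor_def A.weight_sym B.weight_sym)

lemma sum_weight_tensor_snd: "(\<Sum>v'\<in>V. weight_tensor a b ((u, v), (u', v'))) = a (u, u') * q v"
  by (simp add: weight_tensor_simp deg_def sum_distrib_left)

lemma sum_weight_tensor_fst: "(\<Sum>u'\<in>U. weight_tensor a b ((u, v), (u', v'))) = b (v, v') * p u"
  by (simp add: weight_tensor_simp deg_def sum_distrib_left mult.commute)

lemma deg_weight_tensor: "deg (U \<times> V) (weight_tensor a b) (u, v) = p u * q v"
proof -
  have "deg (U \<times> V) (weight_tensor a b) (u, v) = (\<Sum>u'\<in>U. \<Sum>v'\<in>V. weight_tensor a b ((u, v), (u', v')))"
    by (rule deg_prod)
  also have "\<dots> = (\<Sum>u'\<in>U. a (u, u') * q v)" by (simp only: sum_weight_tensor_snd)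
  finally show ?thesis by (simp add: deg_def sum_distrib_right)
qed

lemma strong_solutionD:
  assumes "strong_solution U E a V F b h"
  shows "z \<notin> tensor_edges E F \<Longrightarrow> h z = 0"
    and "x \<in> U \<times> V \<Longrightarrow> y \<in> U \<times> V \<Longrightarrow> h (x, y) = h (y, x)"
    and "u \<in> U \<Longrightarrow> (\<Sum>v\<in>V. deg (U \<times> V) h (u, v)) = 0"
    and "v \<in> V \<Longrightarrow> (\<Sum>u\<in>U. deg (U \<times> V) h (u, v)) = 0"
    and "u \<in> U \<Longrightarrow> u' \<in> U \<Longrightarrow> v \<in> V \<Longrightarrow>
      p u * (\<Sum>v'\<in>V. h ((u, v), (u', v'))) = a (u, u') * deg (U \<times> V) h (u, v)"
    and "v \<in> V \<Longrightarrow> v' \<in> V \<Longrightarrow> u \<in> U \<Longrightarrow>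
      q v * (\<Sum>u'\<in>U. h ((u, v), (u', v'))) = b (v, v') * deg (U \<times> V) h (u, v)"
  using assms unfolding strong_solution_def by blast+

context
  fixes g assumes g: "weight_joining U a V b g"
begin

lemma joining_nonneg: "g z \<ge> 0"
  using g by (cases z) (auto simp: weight_joining_def weight_fun_def)

lemma joining_sym: "g (x, y) = g (y, x)"
  using g by (cases x, cases y) (auto simp: weight_joining_def weight_fun_def)

lemma joining_le_deg: "y \<in> U \<times> V \<Longrightarrow> g (x, y) \<le> deg (U \<times> V) g x"
  unfolding deg_def using A.finite_U B.finite_U joining_nonneg by (intro member_le_sum) auto

lemma joining_deg_nonneg: "deg (U \<times> V) g x \<ge> 0"
  by (simp add: deg_def sum_nonneg joining_nonneg)

lemma joining_deg_le_fst: "u \<in> U \<Longrightarrow> v \<in> V \<Longrightarrow> deg (U \<times> V) g (u, v) \<le> p u"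
  using g B.finite_U joining_deg_nonneg member_le_sum[of v V "\<lambda>v. deg (U \<times> V) g (u, v)"]
  by (auto simp: weight_joining_def)

lemma joining_deg_le_snd: "u \<in> U \<Longrightarrow> v \<in> V \<Longrightarrow> deg (U \<times> V) g (u, v) \<le> q v"
  using g A.finite_U joining_deg_nonneg member_le_sum[of u U "\<lambda>u. deg (U \<times> V) g (u, v)"]
  by (auto simp: weight_joining_def)

text \<open>If (u, u') \<notin> E, the transition equation forces the row sum of g over v' to vanish,
  unless p u = 0, in which case the whole degree of (u, v) vanishes.\<close>
lemma joining_eq_0_fst:
  assumes "(u, u') \<notin> E"
  shows "g ((u, v), (u', v')) = 0"
proof (cases "u \<in> U \<and> v \<in> V \<and> u' \<in> U \<and> v' \<in> V")
  case True
  with assms g A.weight_eq_0 have "p u * (\<Sum>v'\<in>V. g ((u, v), (u', v'))) = 0"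
    by (simp add: weight_joining_def)
  then consider "p u = 0" | "(\<Sum>v'\<in>V. g ((u, v), (u', v'))) = 0" by auto
  then show ?thesis
  proof cases
    case 1
    with True show ?thesis
      using joining_le_deg[of "(u', v')" "(u, v)"] joining_deg_le_fst[of u v]
        joining_nonneg[of "((u, v), (u', v'))"] by simp
  next
    case 2
    with True show ?thesis
      using sum_nonneg_eq_0_iff[OF B.finite_U, of "\<lambda>v'. g ((u, v), (u', v'))"] joining_nonneg by auto
  qed
next
  case False
  with g show ?thesis by (auto simp: weight_joining_def weight_fun_def)
qed

lemma joining_eq_0_snd:
  assumes "(v, v') \<notin> F"
  shows "g ((u, v), (u', v')) = 0"
proof (cases "u \<in> U \<and> v \<in> V \<and> u' \<in> U \<and> v' \<in> V")
  case True
  with assms g B.weight_eq_0 have "q v * (\<Sum>u'\<in>U. g ((u, v), (u', v'))) = 0"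
    by (simp add: weight_joining_def)
  then consider "q v = 0" | "(\<Sum>u'\<in>U. g ((u, v), (u', v'))) = 0" by auto
  then show ?thesis
  proof cases
    case 1
    with True show ?thesis
      using joining_le_deg[of "(u', v')" "(u, v)"] joining_deg_le_snd[of u v]
        joining_nonneg[of "((u, v), (u', v'))"] by simp
  next
    case 2
    with True show ?thesis
      using sum_nonneg_eq_0_iff[OF A.finite_U, of "\<lambda>u'. g ((u, v), (u', v'))"] joining_nonneg by auto
  qed
next
  case False
  with g show ?thesis by (auto simp: weight_joining_def weight_fun_def)
qed

lemma joining_eq_0: "z \<notin> tensor_edges E F \<Longrightarrow> g z = 0"
  using joining_eq_0_fst joining_eq_0_snd by (cases z) (auto simp: tensor_edges_def)

lemma strong_solution_joining_diff: "strong_solution U E a V F b (\<lambda>z. g z - weight_tensor a b z)"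
  unfolding strong_solution_def
proof (intro conjI ballI allI impI)
  fix z assume "z \<notin> tensor_edges E F"
  then show "g z - weight_tensor a b z = 0" using joining_eq_0 weight_tensor_eq_0 by simp
next
  fix x y
  show "g (x, y) - weight_tensor a b (x, y) = g (y, x) - weight_tensor a b (y, x)"
    by (simp add: joining_sym weight_tensor_sym)
next
  fix u assume "u \<in> U"
  then show "(\<Sum>v\<in>V. deg (U \<times> V) (\<lambda>z. g z - weight_tensor a b z) (u, v)) = 0"
    using g B.sum_deg
    by (simp add: deg_diff deg_weight_tensor sum_subtractf sum_distrib_left[symmetric] weight_joining_def)
next
  fix v assume "v \<in> V"
  then show "(\<Sum>u\<in>U. deg (U \<times> V) (\<lambda>z. g z - weight_tensor a b z) (u, v)) = 0"
    using g A.sum_deg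
    by (simp add: deg_diff deg_weight_tensor sum_subtractf sum_distrib_right[symmetric] weight_joining_def)
next
  fix u u' v assume "u \<in> U" "u' \<in> U" "v \<in> V"
  then show "p u * (\<Sum>v'\<in>V. g ((u, v), (u', v')) - weight_tensor a b ((u, v), (u', v')))
      = a (u, u') * deg (U \<times> V) (\<lambda>z. g z - weight_tensor a b z) (u, v)"
    using g unfolding sum_subtractf sum_weight_tensor_snd deg_diff deg_weight_tensor
    by (simp add: weight_joining_def algebra_simps)
next
  fix v v' u assume "v \<in> V" "v' \<in> V" "u \<in> U"
  then show "q v * (\<Sum>u'\<in>U. g ((u, v), (u', v')) - weight_tensor a b ((u, v), (u', v')))
      = b (v, v') * deg (U \<times> V) (\<lambda>z. g z - weight_tensor a b z) (u, v)"
    using g unfolding sum_subtractf sum_weight_tensor_fst deg_diff deg_weight_tensor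
    by (simp add: weight_joining_def algebra_simps)
qed

end

lemma sum_pairs_eq_sum_deg: "(\<Sum>z\<in>(U \<times> V) \<times> (U \<times> V). h z) = (\<Sum>u\<in>U. \<Sum>v\<in>V. deg (U \<times> V) h (u, v))"
  by (simp add: deg_def sum.cartesian_product')

context
  fixes h \<epsilon> assumes h: "strong_solution U E a V F b h"
    and nonneg: "\<And>z. z \<in> tensor_edges E F \<Longrightarrow> weight_tensor a b z + \<epsilon> * h z \<ge> 0"
begin

lemma deg_tensor_perturbation:
  "deg (U \<times> V) (\<lambda>z. weight_tensor a b z + \<epsilon> * h z) (u, v) = p u * q v + \<epsilon> * deg (U \<times> V) h (u, v)"
  by (simp add: deg_add_scaled deg_weight_tensor)

lemma sum_deg_tensor_perturbation_fst:
  assumes "u \<in> U"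
  shows "(\<Sum>v\<in>V. deg (U \<times> V) (\<lambda>z. weight_tensor a b z + \<epsilon> * h z) (u, v)) = p u"
proof -
  have "(\<Sum>v\<in>V. deg (U \<times> V) (\<lambda>z. weight_tensor a b z + \<epsilon> * h z) (u, v))
      = p u * (\<Sum>v\<in>V. q v) + \<epsilon> * (\<Sum>v\<in>V. deg (U \<times> V) h (u, v))"
    by (simp add: deg_tensor_perturbation sum.distrib sum_distrib_left)
  then show ?thesis using strong_solutionD(3)[OF h assms] B.sum_deg by simp
qed

lemma sum_deg_tensor_perturbation_snd:
  assumes "v \<in> V"
  shows "(\<Sum>u\<in>U. deg (U \<times> V) (\<lambda>z. weight_tensor a b z + \<epsilon> * h z) (u, v)) = q v"
proof -
  have "(\<Sum>u\<in>U. deg (U \<times> V) (\<lambda>z. weight_tensor a b z + \<epsilon> * h z) (u, v))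
      = (\<Sum>u\<in>U. p u) * q v + \<epsilon> * (\<Sum>u\<in>U. deg (U \<times> V) h (u, v))"
    by (simp add: deg_tensor_perturbation sum.distrib sum_distrib_left sum_distrib_right)
  then show ?thesis using strong_solutionD(4)[OF h assms] A.sum_deg by simp
qed

lemma tensor_perturbation_eq_0:
  "z \<notin> tensor_edges E F \<Longrightarrow> weight_tensor a b z + \<epsilon> * h z = 0"
  using strong_solutionD(1)[OF h] weight_tensor_eq_0 by simp

lemma weight_fun_tensor_perturbation: "weight_fun (U \<times> V) (\<lambda>z. weight_tensor a b z + \<epsilon> * h z)"
  unfolding weight_fun_def
proof (intro conjI allI impI)
  fix x y
  show "0 \<le> weight_tensor a b (x, y) + \<epsilon> * h (x, y)"
    using nonneg tensor_perturbation_eq_0 by (cases "(x, y) \<in> tensor_edges E F") auto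
  show "weight_tensor a b (x, y) + \<epsilon> * h (x, y) = weight_tensor a b (y, x) + \<epsilon> * h (y, x)"
  proof (cases "x \<in> U \<times> V \<and> y \<in> U \<times> V")
    case True
    then show ?thesis using strong_solutionD(2)[OF h, of x y] by (simp add: weight_tensor_sym)
  next
    case False
    then have "(x, y) \<notin> tensor_edges E F" "(y, x) \<notin> tensor_edges E F"
      using tensor_edges_subset by auto
    then show ?thesis by (simp add: tensor_perturbation_eq_0)
  qed
  show "weight_tensor a b (x, y) + \<epsilon> * h (x, y) = 0" if "(x, y) \<notin> (U \<times> V) \<times> (U \<times> V)"
    using that tensor_edges_subset by (intro tensor_perturbation_eq_0) auto
next
  show "(\<Sum>z\<in>(U \<times> V) \<times> (U \<times> V). weight_tensor a b z + \<epsilon> * h z) = 1"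
    using sum_pairs_eq_sum_deg[of "\<lambda>z. weight_tensor a b z + \<epsilon> * h z"]
    by (simp add: sum_deg_tensor_perturbation_fst A.sum_deg)
qed

lemma weight_joining_tensor_perturbation:
  "weight_joining U a V b (\<lambda>z. weight_tensor a b z + \<epsilon> * h z)"
  unfolding weight_joining_def
proof (intro conjI ballI weight_fun_tensor_perturbation sum_deg_tensor_perturbation_fst
    sum_deg_tensor_perturbation_snd)
  fix u u' v assume uv: "u \<in> U" "u' \<in> U" "v \<in> V"
  have "p u * (\<Sum>v'\<in>V. weight_tensor a b ((u, v), (u', v')) + \<epsilon> * h ((u, v), (u', v')))
      = a (u, u') * (p u * q v) + \<epsilon> * (p u * (\<Sum>v'\<in>V. h ((u, v), (u', v'))))"
    by (simp add: sum.distrib sum_distrib_left[symmetric] sum_weight_tensor_snd algebra_simps)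
  also have "\<dots> = a (u, u') * deg (U \<times> V) (\<lambda>z. weight_tensor a b z + \<epsilon> * h z) (u, v)"
    unfolding strong_solutionD(5)[OF h uv] deg_tensor_perturbation by (simp add: algebra_simps)
  finally show "p u * (\<Sum>v'\<in>V. weight_tensor a b ((u, v), (u', v')) + \<epsilon> * h ((u, v), (u', v')))
      = a (u, u') * deg (U \<times> V) (\<lambda>z. weight_tensor a b z + \<epsilon> * h z) (u, v)" .
next
  fix v v' u assume vu: "v \<in> V" "v' \<in> V" "u \<in> U"
  have "q v * (\<Sum>u'\<in>U. weight_tensor a b ((u, v), (u', v')) + \<epsilon> * h ((u, v), (u', v')))
      = b (v, v') * (p u * q v) + \<epsilon> * (q v * (\<Sum>u'\<in>U. h ((u, v), (u', v'))))"
    by (simp add: sum.distrib sum_distrib_left[symmetric] sum_weight_tensor_fst algebra_simps)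
  also have "\<dots> = b (v, v') * deg (U \<times> V) (\<lambda>z. weight_tensor a b z + \<epsilon> * h z) (u, v)"
    unfolding strong_solutionD(6)[OF h vu] deg_tensor_perturbation by (simp add: algebra_simps)
  finally show "q v * (\<Sum>u'\<in>U. weight_tensor a b ((u, v), (u', v')) + \<epsilon> * h ((u, v), (u', v')))
      = b (v, v') * deg (U \<times> V) (\<lambda>z. weight_tensor a b z + \<epsilon> * h z) (u, v)" .
qed

end

lemma joining_perturbation:
  assumes h: "strong_solution U E a V F b h"
  obtains \<epsilon> where "\<epsilon> > 0" "weight_joining U a V b (\<lambda>z. weight_tensor a b z + \<epsilon> * h z)"
proof -
  obtain \<epsilon> where "\<epsilon> > 0" "\<And>z. z \<in> tensor_edges E F \<Longrightarrow> weight_tensor a b z + \<epsilon> * h z \<ge> 0"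
    using exists_perturbation_nonneg[OF finite_tensor_edges, of "weight_tensor a b" h]
      weight_tensor_pos_iff by blast
  with h show thesis using that weight_joining_tensor_perturbation by blast
qed

theorem strongly_disjoint_iff:
  "strongly_disjoint U a V b \<longleftrightarrow> (\<forall>h. strong_solution U E a V F b h \<longrightarrow> (\<forall>z. h z = 0))"
proof (intro iffI allI impI)
  fix h z assume sd: "strongly_disjoint U a V b" and h: "strong_solution U E a V F b h"
  obtain \<epsilon> where "\<epsilon> > 0" and joining: "weight_joining U a V b (\<lambda>z. weight_tensor a b z + \<epsilon> * h z)"
    using joining_perturbation[OF h] .
  have "weight_tensor a b (x, y) + \<epsilon> * h (x, y) = weight_tensor a b (x, y)"
    if "x \<in> U \<times> V" "y \<in> U \<times> V" for x y
    using sd[unfolded strongly_disjoint_def, rule_format, OF joining that]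
    by (simp add: weight_tensor_def)
  with \<open>\<epsilon> > 0\<close> have "h (x, y) = 0" if "(x, y) \<in> (U \<times> V) \<times> (U \<times> V)" for x y
    using that by simp
  moreover have "h (x, y) = 0" if "(x, y) \<notin> (U \<times> V) \<times> (U \<times> V)" for x y
    using that strong_solutionD(1)[OF h] tensor_edges_subset by blast
  ultimately show "h z = 0" by (cases z) blast
next
  assume trivial: "\<forall>h. strong_solution U E a V F b h \<longrightarrow> (\<forall>z. h z = 0)"
  show "strongly_disjoint U a V b"
    unfolding strongly_disjoint_def
  proof (intro allI impI ballI)
    fix g x y assume "weight_joining U a V b g"
    then have "g (x, y) - weight_tensor a b (x, y) = 0"
      using trivial[rule_format, OF strong_solution_joining_diff] by simp
    then show "g (x, y) = a (fst x, fst y) * b (snd x, snd y)" by (simp add: weight_tensor_def)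
  qed
qed

end

section \<open>Weak solutions\<close>

text \<open>k stands for the relative deviation r / (p * q) - 1 of the degree r of a weight joining from
  the product p * q of the degrees (see weak_solution_deg_div).\<close>
definition weak_solution ::
  "'u set \<Rightarrow> ('u \<times> 'u) set \<Rightarrow> ('u \<times> 'u \<Rightarrow> real) \<Rightarrow> 'v set \<Rightarrow> ('v \<times> 'v) set \<Rightarrow> ('v \<times> 'v \<Rightarrow> real)
    \<Rightarrow> ('u \<times> 'v \<Rightarrow> real) \<Rightarrow> bool" where
  "weak_solution U E a V F b k \<longleftrightarrow>
     (\<forall>z. z \<notin> Domain E \<times> Domain F \<longrightarrow> k z = 0) \<and>
     (\<forall>u\<in>U. \<forall>v\<in>V. deg V b v * (\<Sum>u'\<in>U. a (u, u') * k (u', v)) = deg U a u * (\<Sum>v'\<in>V. b (v, v') * k (u, v'))) \<and>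
     (\<forall>u\<in>U. (\<Sum>v\<in>V. deg V b v * k (u, v)) = 0) \<and>
     (\<forall>v\<in>V. (\<Sum>u\<in>U. deg U a u * k (u, v)) = 0)"

context weighted_graph
begin

text \<open>Summing w (x, y) * (\<phi> y - s * \<phi> x)^2 over all x, y and using the eigenvalue equation
  twice gives 0.\<close>
lemma eigenfunction_edge_eq:
  assumes eig: "\<And>x. x \<in> U \<Longrightarrow> (\<Sum>y\<in>U. w (x, y) * \<phi> y) = s * deg U w x * \<phi> x"
    and s: "s * s = 1" and edge: "w (x0, y0) \<noteq> 0"
  shows "\<phi> y0 = s * \<phi> x0"
proof -
  have expand: "(\<Sum>y\<in>U. w (x, y) * (\<phi> y - s * \<phi> x)\<^sup>2) =
      (\<Sum>y\<in>U. w (x, y) * (\<phi> y)\<^sup>2) - 2 * s * \<phi> x * (\<Sum>y\<in>U. w (x, y) * \<phi> y) + (\<phi> x)\<^sup>2 * deg U w x" for x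
  proof -
    have "(s * \<phi> x)\<^sup>2 = (\<phi> x)\<^sup>2" using s by (simp add: power2_eq_square algebra_simps)
    then have "w (x, y) * (\<phi> y - s * \<phi> x)\<^sup>2 =
        w (x, y) * (\<phi> y)\<^sup>2 - 2 * s * \<phi> x * (w (x, y) * \<phi> y) + (\<phi> x)\<^sup>2 * w (x, y)" for y
      by (simp add: power2_diff algebra_simps)
    then show ?thesis by (simp add: sum.distrib sum_subtractf sum_distrib_left deg_def)
  qed
  have squares: "(\<Sum>x\<in>U. \<Sum>y\<in>U. w (x, y) * (\<phi> y)\<^sup>2) = (\<Sum>y\<in>U. deg U w y * (\<phi> y)\<^sup>2)"
    by (subst sum.swap) (simp add: deg_def sum_distrib_right weight_sym)
  have cross: "(\<Sum>x\<in>U. 2 * s * \<phi> x * (\<Sum>y\<in>U. w (x, y) * \<phi> y)) = 2 * (\<Sum>x\<in>U. deg U w x * (\<phi> x)\<^sup>2)"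
  proof -
    have "(\<Sum>x\<in>U. 2 * s * \<phi> x * (\<Sum>y\<in>U. w (x, y) * \<phi> y)) = (\<Sum>x\<in>U. 2 * (s * s) * (deg U w x * (\<phi> x)\<^sup>2))"
    proof (rule sum.cong[OF refl])
      fix x assume "x \<in> U"
      then show "2 * s * \<phi> x * (\<Sum>y\<in>U. w (x, y) * \<phi> y) = 2 * (s * s) * (deg U w x * (\<phi> x)\<^sup>2)"
        unfolding eig[OF \<open>x \<in> U\<close>] by (simp add: power2_eq_square mult_ac)
    qed
    also have "\<dots> = 2 * (\<Sum>x\<in>U. deg U w x * (\<phi> x)\<^sup>2)" using s by (simp add: sum_distrib_left)
    finally show ?thesis .
  qed
  have "(\<Sum>x\<in>U. \<Sum>y\<in>U. w (x, y) * (\<phi> y - s * \<phi> x)\<^sup>2) =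
      (\<Sum>x\<in>U. \<Sum>y\<in>U. w (x, y) * (\<phi> y)\<^sup>2) - (\<Sum>x\<in>U. 2 * s * \<phi> x * (\<Sum>y\<in>U. w (x, y) * \<phi> y))
        + (\<Sum>x\<in>U. (\<phi> x)\<^sup>2 * deg U w x)"
    by (simp only: expand sum.distrib sum_subtractf)
  also have "\<dots> = 0" unfolding squares cross by (simp add: mult.commute)
  finally have "(\<Sum>x\<in>U. \<Sum>y\<in>U. w (x, y) * (\<phi> y - s * \<phi> x)\<^sup>2) = 0" .
  moreover have nonneg: "0 \<le> w (x, y) * (\<phi> y - s * \<phi> x)\<^sup>2" for x y by (simp add: weight_nonneg)
  moreover have "x0 \<in> U" "y0 \<in> U" using edge weight_outside by blast+
  ultimately have "(\<Sum>y\<in>U. w (x0, y) * (\<phi> y - s * \<phi> x0)\<^sup>2) = 0"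
    by (simp add: sum_nonneg_eq_0_iff[OF finite_U] sum_nonneg)
  then have "w (x0, y0) * (\<phi> y0 - s * \<phi> x0)\<^sup>2 = 0"
    using \<open>y0 \<in> U\<close> nonneg by (simp add: sum_nonneg_eq_0_iff[OF finite_U])
  with edge show ?thesis by simp
qed

end

context weighted_pair
begin

lemma weak_solutionD:
  assumes "weak_solution U E a V F b k"
  shows "z \<notin> Domain E \<times> Domain F \<Longrightarrow> k z = 0"
    and "u \<in> U \<Longrightarrow> v \<in> V \<Longrightarrow>
      q v * (\<Sum>u'\<in>U. a (u, u') * k (u', v)) = p u * (\<Sum>v'\<in>V. b (v, v') * k (u, v'))"
    and "u \<in> U \<Longrightarrow> (\<Sum>v\<in>V. q v * k (u, v)) = 0"
    and "v \<in> V \<Longrightarrow> (\<Sum>u\<in>U. p u * k (u, v)) = 0"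
  using assms unfolding weak_solution_def by blast+

lemma weak_solution_nonzero:
  assumes "weak_solution U E a V F b k" "k (u, v) \<noteq> 0"
  shows "u \<in> U" "v \<in> V" "p u > 0" "q v > 0"
proof -
  have "u \<in> Domain E" "v \<in> Domain F" using weak_solutionD(1)[OF assms(1)] assms(2) by blast+
  then show "u \<in> U" "v \<in> V" "p u > 0" "q v > 0"
    using A.E_subset B.E_subset A.deg_pos_iff B.deg_pos_iff by auto
qed

lemma strong_solution_deg_outside:
  assumes "strong_solution U E a V F b h" "(u, v) \<notin> Domain E \<times> Domain F"
  shows "deg (U \<times> V) h (u, v) = 0"
proof -
  have "h ((u, v), y) = 0" for y
    using strong_solutionD(1)[OF assms(1)] assms(2) by (cases y) (auto simp: Domain_iff)
  then show ?thesis by (simp add: deg_def)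
qed

lemma sum_weight_deg_div_fst:
  assumes h: "strong_solution U E a V F b h" and "u \<in> U" "v \<in> V"
  shows "(\<Sum>u'\<in>U. a (u, u') * deg (U \<times> V) h (u', v) / p u') = (\<Sum>u'\<in>U. \<Sum>v'\<in>V. h ((u', v), (u, v')))"
proof (rule sum.cong[OF refl])
  fix u' assume "u' \<in> U"
  show "a (u, u') * deg (U \<times> V) h (u', v) / p u' = (\<Sum>v'\<in>V. h ((u', v), (u, v')))"
  proof (cases "p u' = 0")
    case True
    then have "u' \<notin> Domain E" by (simp add: A.deg_eq_0_iff)
    then have "h ((u', v), (u, v')) = 0" for v'
      using strong_solutionD(1)[OF h] by (auto simp: Domain_iff)
    with True show ?thesis by simp
  next
    case False
    with strong_solutionD(5)[OF h \<open>u' \<in> U\<close> \<open>u \<in> U\<close> \<open>v \<in> V\<close>] show ?thesis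
      by (simp add: field_simps A.weight_sym)
  qed
qed

lemma sum_weight_deg_div_snd:
  assumes h: "strong_solution U E a V F b h" and "u \<in> U" "v \<in> V"
  shows "(\<Sum>v'\<in>V. b (v, v') * deg (U \<times> V) h (u, v') / q v') = (\<Sum>v'\<in>V. \<Sum>u'\<in>U. h ((u, v'), (u', v)))"
proof (rule sum.cong[OF refl])
  fix v' assume "v' \<in> V"
  show "b (v, v') * deg (U \<times> V) h (u, v') / q v' = (\<Sum>u'\<in>U. h ((u, v'), (u', v)))"
  proof (cases "q v' = 0")
    case True
    then have "v' \<notin> Domain F" by (simp add: B.deg_eq_0_iff)
    then have "h ((u, v'), (u', v)) = 0" for u'
      using strong_solutionD(1)[OF h] by (auto simp: Domain_iff)
    with True show ?thesis by simp
  next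
    case False
    with strong_solutionD(6)[OF h \<open>v' \<in> V\<close> \<open>v \<in> V\<close> \<open>u \<in> U\<close>] show ?thesis
      by (simp add: field_simps B.weight_sym)
  qed
qed

text \<open>Where p u * q v = 0 the quotient is 0 by the convention x / 0 = 0, which is exactly the
  support condition of a weak solution.\<close>
lemma weak_solution_deg_div:
  assumes h: "strong_solution U E a V F b h"
  shows "weak_solution U E a V F b (\<lambda>(u, v). deg (U \<times> V) h (u, v) / (p u * q v))"
    (is "weak_solution U E a V F b ?k")
  unfolding weak_solution_def
proof (intro conjI allI impI ballI)
  fix z assume "z \<notin> Domain E \<times> Domain F"
  then show "?k z = 0" using A.deg_eq_0_iff B.deg_eq_0_iff by (cases z) auto
next
  fix u v assume uv: "u \<in> U" "v \<in> V"
  show "q v * (\<Sum>u'\<in>U. a (u, u') * ?k (u', v)) = p u * (\<Sum>v'\<in>V. b (v, v') * ?k (u, v'))"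
  proof (cases "p u = 0 \<or> q v = 0")
    case True
    then show ?thesis using A.weight_eq_0_if_deg_eq_0 B.weight_eq_0_if_deg_eq_0 by auto
  next
    case False
    then have "q v * (\<Sum>u'\<in>U. a (u, u') * ?k (u', v)) = (\<Sum>u'\<in>U. a (u, u') * deg (U \<times> V) h (u', v) / p u')"
      by (simp add: sum_distrib_left)
    also have "\<dots> = (\<Sum>v'\<in>V. \<Sum>u'\<in>U. h ((u, v'), (u', v)))"
      unfolding sum_weight_deg_div_fst[OF h uv] using strong_solutionD(2)[OF h] uv
      by (subst sum.swap) (auto intro!: sum.cong)
    also have "\<dots> = p u * (\<Sum>v'\<in>V. b (v, v') * ?k (u, v'))"
      using False by (simp add: sum_weight_deg_div_snd[OF h uv, symmetric] sum_distrib_left)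
    finally show ?thesis .
  qed
next
  fix u assume "u \<in> U"
  have "q v * ?k (u, v) = deg (U \<times> V) h (u, v) / p u" for v
    using strong_solution_deg_outside[OF h, of u v] B.deg_eq_0_iff by (cases "q v = 0") auto
  then show "(\<Sum>v\<in>V. q v * ?k (u, v)) = 0"
    using strong_solutionD(3)[OF h \<open>u \<in> U\<close>] by (simp add: sum_divide_distrib[symmetric])
next
  fix v assume "v \<in> V"
  have "p u * ?k (u, v) = deg (U \<times> V) h (u, v) / q v" for u
    using strong_solution_deg_outside[OF h, of u v] A.deg_eq_0_iff by (cases "p u = 0") auto
  then show "(\<Sum>u\<in>U. p u * ?k (u, v)) = 0"
    using strong_solutionD(4)[OF h \<open>v \<in> V\<close>] by (simp add: sum_divide_distrib[symmetric])
qed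

text \<open>By division by zero, left_avg k (u, v) = 0 where p u = 0.\<close>
definition left_avg :: "('u \<times> 'v \<Rightarrow> real) \<Rightarrow> 'u \<times> 'v \<Rightarrow> real" where
  "left_avg k z = (\<Sum>u'\<in>U. a (fst z, u') * k (u', snd z)) / p (fst z)"

lemma deg_mult_left_avg: "p u * left_avg k (u, v) = (\<Sum>u'\<in>U. a (u, u') * k (u', v))"
  using A.weight_eq_0_if_deg_eq_0 by (cases "p u = 0") (auto simp: left_avg_def)

lemma left_avg_add_scaled: "left_avg (\<lambda>z. k z + t * l z) z = left_avg k z + t * left_avg l z"
  by (simp add: left_avg_def sum.distrib sum_distrib_left add_divide_distrib algebra_simps)

lemma weak_solution_add_scaled:
  assumes k: "weak_solution U E a V F b k" and l: "weak_solution U E a V F b l"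
  shows "weak_solution U E a V F b (\<lambda>z. k z + t * l z)"
  unfolding weak_solution_def
proof (intro conjI allI impI ballI)
  fix z assume "z \<notin> Domain E \<times> Domain F"
  then show "k z + t * l z = 0" using weak_solutionD(1)[OF k] weak_solutionD(1)[OF l] by simp
next
  fix u v assume "u \<in> U" "v \<in> V"
  have "q v * (\<Sum>u'\<in>U. a (u, u') * (k (u', v) + t * l (u', v)))
      = q v * (\<Sum>u'\<in>U. a (u, u') * k (u', v)) + t * (q v * (\<Sum>u'\<in>U. a (u, u') * l (u', v)))"
    by (simp add: sum.distrib sum_distrib_left algebra_simps)
  also have "\<dots> = p u * (\<Sum>v'\<in>V. b (v, v') * k (u, v')) + t * (p u * (\<Sum>v'\<in>V. b (v, v') * l (u, v')))"
    using weak_solutionD(2)[OF k \<open>u \<in> U\<close> \<open>v \<in> V\<close>] weak_solutionD(2)[OF l \<open>u \<in> U\<close> \<open>v \<in> V\<close>] by simp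
  also have "\<dots> = p u * (\<Sum>v'\<in>V. b (v, v') * (k (u, v') + t * l (u, v')))"
    by (simp add: sum.distrib sum_distrib_left algebra_simps)
  finally show "q v * (\<Sum>u'\<in>U. a (u, u') * (k (u', v) + t * l (u', v)))
      = p u * (\<Sum>v'\<in>V. b (v, v') * (k (u, v') + t * l (u, v')))" .
next
  fix u assume "u \<in> U"
  have "(\<Sum>v\<in>V. q v * (k (u, v) + t * l (u, v))) = (\<Sum>v\<in>V. q v * k (u, v)) + t * (\<Sum>v\<in>V. q v * l (u, v))"
    by (simp add: sum.distrib sum_distrib_left algebra_simps)
  then show "(\<Sum>v\<in>V. q v * (k (u, v) + t * l (u, v))) = 0"
    using weak_solutionD(3)[OF k \<open>u \<in> U\<close>] weak_solutionD(3)[OF l \<open>u \<in> U\<close>] by simp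
next
  fix v assume "v \<in> V"
  have "(\<Sum>u\<in>U. p u * (k (u, v) + t * l (u, v))) = (\<Sum>u\<in>U. p u * k (u, v)) + t * (\<Sum>u\<in>U. p u * l (u, v))"
    by (simp add: sum.distrib sum_distrib_left algebra_simps)
  then show "(\<Sum>u\<in>U. p u * (k (u, v) + t * l (u, v))) = 0"
    using weak_solutionD(4)[OF k \<open>v \<in> V\<close>] weak_solutionD(4)[OF l \<open>v \<in> V\<close>] by simp
qed

lemma weak_solution_sum_snd:
  assumes k: "weak_solution U E a V F b k" and "u \<in> U" "v \<in> V"
  shows "(\<Sum>v'\<in>V. b (v, v') * k (u, v')) = q v * left_avg k (u, v)"
proof (cases "p u = 0 \<or> q v = 0")
  case True
  then show ?thesis
  proof
    assume "p u = 0"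
    then have "k (u, v') = 0" for v' using weak_solutionD(1)[OF k] A.deg_eq_0_iff by auto
    with \<open>p u = 0\<close> show ?thesis by (simp add: left_avg_def)
  qed (simp add: B.weight_eq_0_if_deg_eq_0)
next
  case False
  with weak_solutionD(2)[OF k \<open>u \<in> U\<close> \<open>v \<in> V\<close>] show ?thesis
    by (simp add: left_avg_def field_simps)
qed

lemma weak_solution_left_avg:
  assumes k: "weak_solution U E a V F b k"
  shows "weak_solution U E a V F b (left_avg k)"
  unfolding weak_solution_def
proof (intro conjI allI impI ballI)
  fix z assume "z \<notin> Domain E \<times> Domain F"
  then show "left_avg k z = 0"
    using weak_solutionD(1)[OF k] A.deg_eq_0_iff by (cases z) (auto simp: left_avg_def)
next
  fix u v assume "u \<in> U" "v \<in> V"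
  have "q v * (\<Sum>u'\<in>U. a (u, u') * left_avg k (u', v)) = (\<Sum>u'\<in>U. a (u, u') * (\<Sum>v'\<in>V. b (v, v') * k (u', v')))"
    using weak_solution_sum_snd[OF k _ \<open>v \<in> V\<close>] by (simp add: sum_distrib_left mult_ac)
  also have "\<dots> = (\<Sum>v'\<in>V. b (v, v') * (\<Sum>u'\<in>U. a (u, u') * k (u', v')))"
    by (simp add: sum_distrib_left mult_ac sum.swap[of _ V])
  also have "\<dots> = p u * (\<Sum>v'\<in>V. b (v, v') * left_avg k (u, v'))"
    by (simp add: deg_mult_left_avg[symmetric] sum_distrib_left mult_ac)
  finally show "q v * (\<Sum>u'\<in>U. a (u, u') * left_avg k (u', v)) = p u * (\<Sum>v'\<in>V. b (v, v') * left_avg k (u, v'))" .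
next
  fix u assume "u \<in> U"
  have "(\<Sum>v\<in>V. q v * left_avg k (u, v)) = (\<Sum>v\<in>V. \<Sum>v'\<in>V. b (v, v') * k (u, v'))"
    using weak_solution_sum_snd[OF k \<open>u \<in> U\<close>] by simp
  also have "\<dots> = (\<Sum>v'\<in>V. q v' * k (u, v'))"
    by (subst sum.swap) (simp add: sum_distrib_right[symmetric] B.sum_weight_fst)
  finally show "(\<Sum>v\<in>V. q v * left_avg k (u, v)) = 0" using weak_solutionD(3)[OF k \<open>u \<in> U\<close>] by simp
next
  fix v assume "v \<in> V"
  have "(\<Sum>u\<in>U. p u * left_avg k (u, v)) = (\<Sum>u\<in>U. \<Sum>u'\<in>U. a (u, u') * k (u', v))"
    by (simp add: deg_mult_left_avg)
  also have "\<dots> = (\<Sum>u'\<in>U. p u' * k (u', v))"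
    by (subst sum.swap) (simp add: sum_distrib_right[symmetric] A.sum_weight_fst)
  finally show "(\<Sum>u\<in>U. p u * left_avg k (u, v)) = 0" using weak_solutionD(4)[OF k \<open>v \<in> V\<close>] by simp
qed

text \<open>By joining_perturbation, such an h yields a weight joining whose degree is not p * q.\<close>
definition shifts_degree :: "(('u \<times> 'v) \<times> ('u \<times> 'v) \<Rightarrow> real) \<Rightarrow> bool" where
  "shifts_degree h \<longleftrightarrow> strong_solution U E a V F b h \<and> (\<exists>z\<in>U \<times> V. deg (U \<times> V) h z \<noteq> 0)"

context
  fixes \<kappa> :: "'u \<times> 'v \<Rightarrow> real" and c :: "('u \<times> 'v) \<times> ('u \<times> 'v) \<Rightarrow> real"
  assumes sum_snd: "\<And>u u' v. u \<in> U \<Longrightarrow> u' \<in> U \<Longrightarrow> v \<in> V \<Longrightarrow>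
      (\<Sum>v'\<in>V. b (v, v') * c ((u, v), (u', v'))) = q v * \<kappa> (u, v)"
    and sum_fst: "\<And>u v v'. u \<in> U \<Longrightarrow> v \<in> V \<Longrightarrow> v' \<in> V \<Longrightarrow>
      (\<Sum>u'\<in>U. a (u, u') * c ((u, v), (u', v'))) = p u * \<kappa> (u, v)"
begin

lemma deg_weight_tensor_mult:
  assumes "u \<in> U" "v \<in> V"
  shows "deg (U \<times> V) (\<lambda>z. weight_tensor a b z * c z) (u, v) = p u * q v * \<kappa> (u, v)"
proof -
  have "deg (U \<times> V) (\<lambda>z. weight_tensor a b z * c z) (u, v)
      = (\<Sum>u'\<in>U. a (u, u') * (\<Sum>v'\<in>V. b (v, v') * c ((u, v), (u', v'))))"
    by (simp add: deg_prod weight_tensor_simp sum_distrib_left mult_ac)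
  also have "\<dots> = (\<Sum>u'\<in>U. a (u, u') * (q v * \<kappa> (u, v)))"
    using assms by (intro sum.cong) (simp_all add: sum_snd)
  also have "\<dots> = p u * q v * \<kappa> (u, v)" by (simp add: deg_def[of U a u] sum_distrib_right mult.assoc)
  finally show ?thesis .
qed

lemma strong_solution_weight_tensor_mult:
  assumes \<kappa>: "weak_solution U E a V F b \<kappa>"
    and c_sym: "\<And>x y. weight_tensor a b (x, y) * c (x, y) = weight_tensor a b (x, y) * c (y, x)"
  shows "strong_solution U E a V F b (\<lambda>z. weight_tensor a b z * c z)" (is "strong_solution U E a V F b ?h")
  unfolding strong_solution_def
proof (intro conjI allI impI ballI)
  fix z assume "z \<notin> tensor_edges E F"
  then show "?h z = 0" by (simp add: weight_tensor_eq_0)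
next
  fix x y
  show "?h (x, y) = ?h (y, x)" using c_sym[of x y] by (simp add: weight_tensor_sym)
next
  fix u assume "u \<in> U"
  then have "(\<Sum>v\<in>V. deg (U \<times> V) ?h (u, v)) = p u * (\<Sum>v\<in>V. q v * \<kappa> (u, v))"
    by (simp add: deg_weight_tensor_mult sum_distrib_left mult.assoc)
  then show "(\<Sum>v\<in>V. deg (U \<times> V) ?h (u, v)) = 0"
    using weak_solutionD(3)[OF \<kappa>(1) \<open>u \<in> U\<close>] by simp
next
  fix v assume "v \<in> V"
  then have "(\<Sum>u\<in>U. deg (U \<times> V) ?h (u, v)) = (\<Sum>u\<in>U. p u * q v * \<kappa> (u, v))"
    by (intro sum.cong refl) (simp add: deg_weight_tensor_mult)
  also have "\<dots> = q v * (\<Sum>u\<in>U. p u * \<kappa> (u, v))" by (simp add: sum_distrib_left mult_ac)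
  finally have "(\<Sum>u\<in>U. deg (U \<times> V) ?h (u, v)) = q v * (\<Sum>u\<in>U. p u * \<kappa> (u, v))" .
  then show "(\<Sum>u\<in>U. deg (U \<times> V) ?h (u, v)) = 0"
    using weak_solutionD(4)[OF \<kappa>(1) \<open>v \<in> V\<close>] by simp
next
  fix u u' v assume uv: "u \<in> U" "u' \<in> U" "v \<in> V"
  have "(\<Sum>v'\<in>V. ?h ((u, v), (u', v'))) = a (u, u') * (\<Sum>v'\<in>V. b (v, v') * c ((u, v), (u', v')))"
    by (simp add: weight_tensor_simp sum_distrib_left mult.assoc)
  then show "p u * (\<Sum>v'\<in>V. ?h ((u, v), (u', v'))) = a (u, u') * deg (U \<times> V) ?h (u, v)"
    unfolding deg_weight_tensor_mult[OF uv(1,3)] by (simp add: sum_snd[OF uv] mult_ac)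
next
  fix v v' u assume vu: "v \<in> V" "v' \<in> V" "u \<in> U"
  have "(\<Sum>u'\<in>U. ?h ((u, v), (u', v'))) = b (v, v') * (\<Sum>u'\<in>U. a (u, u') * c ((u, v), (u', v')))"
    by (simp add: weight_tensor_simp sum_distrib_left mult_ac)
  then show "q v * (\<Sum>u'\<in>U. ?h ((u, v), (u', v'))) = b (v, v') * deg (U \<times> V) ?h (u, v)"
    unfolding deg_weight_tensor_mult[OF vu(3,1)] by (simp add: sum_fst[OF vu(3,1,2)] mult_ac)
qed

lemma shifts_degree_weight_tensor_mult:
  assumes \<kappa>: "weak_solution U E a V F b \<kappa>" "\<kappa> z0 \<noteq> 0"
    and c_sym: "\<And>x y. weight_tensor a b (x, y) * c (x, y) = weight_tensor a b (x, y) * c (y, x)"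
  shows "shifts_degree (\<lambda>z. weight_tensor a b z * c z)"
proof -
  obtain u0 v0 where z0: "z0 = (u0, v0)" by fastforce
  with \<kappa> have "u0 \<in> U" "v0 \<in> V" "p u0 > 0" "q v0 > 0"
    using weak_solution_nonzero by blast+
  then have "deg (U \<times> V) (\<lambda>z. weight_tensor a b z * c z) (u0, v0) \<noteq> 0"
    using \<kappa>(2) z0 by (simp add: deg_weight_tensor_mult)
  with \<open>u0 \<in> U\<close> \<open>v0 \<in> V\<close> show ?thesis
    using strong_solution_weight_tensor_mult[OF \<kappa>(1) c_sym] by (auto simp: shifts_degree_def)
qed

end

text \<open>With m = left_avg k, the correction c below satisfies the row and column equations with
  \<kappa> = k - left_avg m, which is nonzero as soon as left_avg is not involutive at k.\<close>
lemma shifts_degree_left_avg_not_involutive: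
  assumes k: "weak_solution U E a V F b k" and z1: "left_avg (left_avg k) z1 \<noteq> k z1"
  obtains h where "shifts_degree h"
proof -
  define m where "m = left_avg k"
  define n where "n = left_avg m"
  have m: "weak_solution U E a V F b m" and n: "weak_solution U E a V F b n"
    using weak_solution_left_avg k by (auto simp: m_def n_def)
  define \<kappa> where "\<kappa> z = k z + (-1) * n z" for z
  have \<kappa>: "weak_solution U E a V F b \<kappa>"
    unfolding \<kappa>_def by (rule weak_solution_add_scaled[OF k n])
  define c where "c z = k (fst z) + k (snd z) - m (fst (fst z), snd (snd z)) - m (fst (snd z), snd (fst z))"
    for z :: "('u \<times> 'v) \<times> ('u \<times> 'v)"
  have c: "c ((u, v), (u', v')) = k (u, v) + k (u', v') - m (u, v') - m (u', v)" for u v u' v'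
    by (simp add: c_def)
  have "shifts_degree (\<lambda>z. weight_tensor a b z * c z)"
  proof (rule shifts_degree_weight_tensor_mult[OF _ _ \<kappa>])
    fix u u' v assume "u \<in> U" "u' \<in> U" "v \<in> V"
    have "(\<Sum>v'\<in>V. b (v, v') * c ((u, v), (u', v'))) =
        (\<Sum>v'\<in>V. b (v, v') * k (u, v)) + (\<Sum>v'\<in>V. b (v, v') * k (u', v'))
        - (\<Sum>v'\<in>V. b (v, v') * m (u, v')) - (\<Sum>v'\<in>V. b (v, v') * m (u', v))"
      by (simp add: c sum.distrib sum_subtractf algebra_simps)
    also have "\<dots> = q v * k (u, v) + q v * m (u', v) - q v * n (u, v) - q v * m (u', v)"
      using weak_solution_sum_snd[OF k \<open>u' \<in> U\<close> \<open>v \<in> V\<close>] weak_solution_sum_snd[OF m \<open>u \<in> U\<close> \<open>v \<in> V\<close>]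
      by (simp add: deg_def sum_distrib_right m_def n_def)
    also have "\<dots> = q v * \<kappa> (u, v)" by (simp add: \<kappa>_def algebra_simps)
    finally show "(\<Sum>v'\<in>V. b (v, v') * c ((u, v), (u', v'))) = q v * \<kappa> (u, v)" .
  next
    fix u v v' assume "u \<in> U" "v \<in> V" "v' \<in> V"
    have "(\<Sum>u'\<in>U. a (u, u') * c ((u, v), (u', v'))) =
        (\<Sum>u'\<in>U. a (u, u') * k (u, v)) + (\<Sum>u'\<in>U. a (u, u') * k (u', v'))
        - (\<Sum>u'\<in>U. a (u, u') * m (u, v')) - (\<Sum>u'\<in>U. a (u, u') * m (u', v))"
      by (simp add: c sum.distrib sum_subtractf algebra_simps)
    also have "\<dots> = p u * k (u, v) + p u * m (u, v') - p u * m (u, v') - p u * n (u, v)"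
      by (simp add: deg_def sum_distrib_right deg_mult_left_avg[symmetric] m_def n_def)
    also have "\<dots> = p u * \<kappa> (u, v)" by (simp add: \<kappa>_def algebra_simps)
    finally show "(\<Sum>u'\<in>U. a (u, u') * c ((u, v), (u', v'))) = p u * \<kappa> (u, v)" .
  next
    show "weight_tensor a b (x, y) * c (x, y) = weight_tensor a b (x, y) * c (y, x)" for x y
      by (simp add: c_def)
    show "\<kappa> z1 \<noteq> 0" using z1 by (simp add: \<kappa>_def m_def n_def)
  qed
  then show thesis by (rule that)
qed

text \<open>An eigenfunction of left_avg for the eigenvalue s = \<plusminus>1 changes by the factor s along
  every edge of either graph, so it is invariant along the edges of weight_tensor a b.\<close>
lemma shifts_degree_left_avg_eigen:
  assumes j: "weak_solution U E a V F b j" "j z1 \<noteq> 0"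
    and s: "s * s = 1" and eigen: "\<And>z. left_avg j z = s * j z"
  obtains h where "shifts_degree h"
proof -
  have along_fst: "j (u', v) = s * j (u, v)" if "a (u, u') \<noteq> 0" for u u' v
  proof (rule A.eigenfunction_edge_eq[OF _ s that])
    have "(\<Sum>y\<in>U. a (x, y) * j (y, v)) = p x * left_avg j (x, v)" for x
      by (rule deg_mult_left_avg[symmetric])
    then show "(\<Sum>y\<in>U. a (x, y) * j (y, v)) = s * p x * j (x, v)" for x
      by (simp add: eigen mult_ac)
  qed
  have along_snd: "j (u, v') = s * j (u, v)" if "b (v, v') \<noteq> 0" for u v v'
  proof (cases "u \<in> U")
    case True
    show ?thesis
    proof (rule B.eigenfunction_edge_eq[OF _ s that])
      show "(\<Sum>x\<in>V. b (y, x) * j (u, x)) = s * q y * j (u, y)" if "y \<in> V" for y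
        using weak_solution_sum_snd[OF j(1) True that] eigen[of "(u, y)"] by simp
    qed
  next
    case False
    then have "u \<notin> Domain E" using A.E_subset by blast
    then have "j (u, y) = 0" for y using weak_solutionD(1)[OF j(1)] by simp
    then show ?thesis by simp
  qed
  have "shifts_degree (\<lambda>z. weight_tensor a b z * j (fst z))"
  proof (rule shifts_degree_weight_tensor_mult[OF _ _ j])
    show "(\<Sum>v'\<in>V. b (v, v') * j (fst ((u, v), (u', v')))) = q v * j (u, v)" for u u' v
      by (simp add: deg_def sum_distrib_right)
    show "(\<Sum>u'\<in>U. a (u, u') * j (fst ((u, v), (u', v')))) = p u * j (u, v)" for u v v'
      by (simp add: deg_def sum_distrib_right)
    show "weight_tensor a b (x, y) * j (fst (x, y)) = weight_tensor a b (x, y) * j (fst (y, x))" for x y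
    proof (cases "weight_tensor a b (x, y) = 0")
      case False
      then have "a (fst x, fst y) \<noteq> 0" "b (snd x, snd y) \<noteq> 0" by (auto simp: weight_tensor_def)
      then have "j (fst y, snd x) = s * j x" "j y = s * j (fst y, snd x)"
        using along_fst[of "fst x" "fst y" "snd x"] along_snd[of "snd x" "snd y" "fst y"] by simp_all
      then have "j y = (s * s) * j x" by simp
      with s show ?thesis by simp
    qed simp
  qed
  then show thesis by (rule that)
qed

text \<open>If left_avg is involutive at k, then k + left_avg k and k - left_avg k are eigenfunctions for
  the eigenvalues 1 and -1, and one of them does not vanish where k does not.\<close>
lemma shifts_degree_weak_solution:
  assumes k: "weak_solution U E a V F b k" and z0: "k z0 \<noteq> 0"
  obtains h where "shifts_degree h"
proof (cases "\<forall>z. left_avg (left_avg k) z = k z")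
  case False
  then show thesis using shifts_degree_left_avg_not_involutive[OF k] that by blast
next
  case True
  then have PPk: "left_avg (left_avg k) z = k z" for z by blast
  have Pk: "weak_solution U E a V F b (left_avg k)" by (rule weak_solution_left_avg[OF k])
  define j where "j t = (\<lambda>z. k z + t * left_avg k z)" for t
  have j: "weak_solution U E a V F b (j t)" for t
    unfolding j_def by (rule weak_solution_add_scaled[OF k Pk])
  have eigen: "left_avg (j t) z = t * j t z" if "t * t = 1" for t z
  proof -
    have "left_avg (j t) z = left_avg k z + t * k z" by (simp add: j_def left_avg_add_scaled PPk)
    moreover have "t * j t z = t * k z + (t * t) * left_avg k z" by (simp add: j_def distrib_left mult.assoc)
    ultimately show ?thesis using that by simp
  qed
  have "j 1 z0 + j (-1) z0 = 2 * k z0" by (simp add: j_def)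
  with z0 have "j 1 z0 \<noteq> 0 \<or> j (-1) z0 \<noteq> 0" by auto
  then show thesis
  proof
    assume nonzero: "j 1 z0 \<noteq> 0"
    have "left_avg (j 1) z = 1 * j 1 z" for z by (rule eigen) simp
    from shifts_degree_left_avg_eigen[OF j nonzero _ this that] show thesis by simp
  next
    assume nonzero: "j (-1) z0 \<noteq> 0"
    have "left_avg (j (-1)) z = -1 * j (-1) z" for z by (rule eigen) simp
    from shifts_degree_left_avg_eigen[OF j nonzero _ this that] show thesis by simp
  qed
qed

theorem weakly_disjoint_iff:
  "weakly_disjoint U a V b \<longleftrightarrow> (\<forall>k. weak_solution U E a V F b k \<longrightarrow> (\<forall>z. k z = 0))"
proof (intro iffI allI impI)
  fix k z assume wd: "weakly_disjoint U a V b" and k: "weak_solution U E a V F b k"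
  show "k z = 0"
  proof (rule ccontr)
    assume "k z \<noteq> 0"
    then obtain h where "shifts_degree h" by (rule shifts_degree_weak_solution[OF k])
    then have h: "strong_solution U E a V F b h" and "\<exists>z\<in>U \<times> V. deg (U \<times> V) h z \<noteq> 0"
      by (simp_all add: shifts_degree_def)
    then obtain u v where uv: "u \<in> U" "v \<in> V" "deg (U \<times> V) h (u, v) \<noteq> 0" by auto
    obtain \<epsilon> where "\<epsilon> > 0" and joining: "weight_joining U a V b (\<lambda>z. weight_tensor a b z + \<epsilon> * h z)"
      by (rule joining_perturbation[OF h])
    have "deg (U \<times> V) (\<lambda>z. weight_tensor a b z + \<epsilon> * h z) (u, v) = p u * q v"
      using wd[unfolded weakly_disjoint_def, rule_format, OF joining uv(1,2)] .
    with \<open>\<epsilon> > 0\<close> uv(3) show False by (simp add: deg_add_scaled deg_weight_tensor)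
  qed
next
  assume trivial: "\<forall>k. weak_solution U E a V F b k \<longrightarrow> (\<forall>z. k z = 0)"
  show "weakly_disjoint U a V b"
    unfolding weakly_disjoint_def
  proof (intro allI impI ballI)
    fix g u v assume g: "weight_joining U a V b g" and "u \<in> U" "v \<in> V"
    define h where "h = (\<lambda>z. g z - weight_tensor a b z)"
    have h: "strong_solution U E a V F b h"
      unfolding h_def using g by (rule strong_solution_joining_diff)
    have "deg (U \<times> V) h (u, v) = 0"
    proof (cases "(u, v) \<in> Domain E \<times> Domain F")
      case True
      then have "p u > 0" "q v > 0" by (simp_all add: A.deg_pos_iff B.deg_pos_iff)
      then have "p u * q v \<noteq> 0" by simp
      moreover have "deg (U \<times> V) h (u, v) / (p u * q v) = 0"
        using trivial[rule_format, OF weak_solution_deg_div[OF h], of "(u, v)"] by simp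
      ultimately show ?thesis by simp
    qed (rule strong_solution_deg_outside[OF h])
    then show "deg (U \<times> V) g (u, v) = p u * q v"
      by (simp add: h_def deg_diff deg_weight_tensor)
  qed
qed

end

section \<open>The two dichotomies\<close>

text \<open>The defining equations of weak and strong solutions, indexed by datatypes, so that both
  notions become kernels of finite families of linear functionals whose coefficients are
  polynomials in the weights.\<close>
datatype ('u, 'v) weak_constraint = Balance 'u 'v | Row_Sum 'u | Column_Sum 'v

fun weak_equation ::
  "'u set \<Rightarrow> ('u \<times> 'u \<Rightarrow> real) \<Rightarrow> 'v set \<Rightarrow> ('v \<times> 'v \<Rightarrow> real) \<Rightarrow> ('u, 'v) weak_constraint
    \<Rightarrow> ('u \<times> 'v \<Rightarrow> real) \<Rightarrow> real" where
  "weak_equation U a V b (Balance u v) k =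
     deg V b v * (\<Sum>u'\<in>U. a (u, u') * k (u', v)) - deg U a u * (\<Sum>v'\<in>V. b (v, v') * k (u, v'))"
| "weak_equation U a V b (Row_Sum u) k = (\<Sum>v\<in>V. deg V b v * k (u, v))"
| "weak_equation U a V b (Column_Sum v) k = (\<Sum>u\<in>U. deg U a u * k (u, v))"

definition weak_constraints :: "'u set \<Rightarrow> 'v set \<Rightarrow> ('u, 'v) weak_constraint set" where
  "weak_constraints U V = case_prod Balance ` (U \<times> V) \<union> Row_Sum ` U \<union> Column_Sum ` V"

lemma weak_solution_iff_constraints:
  "weak_solution U E a V F b k \<longleftrightarrow>
    (\<forall>z. z \<notin> Domain E \<times> Domain F \<longrightarrow> k z = 0) \<and> (\<forall>r\<in>weak_constraints U V. weak_equation U a V b r k = 0)"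
  unfolding weak_solution_def weak_constraints_def ball_Un Ball_image_comp by (auto simp: o_def)

lemma linear_functional_weak_equation: "linear_functional (weak_equation U a V b r)"
  by (cases r) (simp_all add: linear_functional_def sum.distrib sum_distrib_left algebra_simps)

lemma polyfun_weak_equation:
  assumes "finite U" "finite V" "\<And>z. (\<lambda>x. A x z) \<in> polyfun I" "\<And>z. (\<lambda>x. B x z) \<in> polyfun I"
  shows "(\<lambda>x. weak_equation U (A x) V (B x) r k) \<in> polyfun I"
  by (cases r) (simp_all add: deg_def assms polyfun_const polyfun_diff polyfun_mult polyfun_sum)

datatype ('u, 'v) strong_constraint =
  Symmetry "'u \<times> 'v" "'u \<times> 'v" | Marginal_Fst 'u | Marginal_Snd 'v
  | Transition_Fst 'u 'u 'v | Transition_Snd 'v 'v 'u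

fun strong_equation ::
  "'u set \<Rightarrow> ('u \<times> 'u \<Rightarrow> real) \<Rightarrow> 'v set \<Rightarrow> ('v \<times> 'v \<Rightarrow> real) \<Rightarrow> ('u, 'v) strong_constraint
    \<Rightarrow> (('u \<times> 'v) \<times> ('u \<times> 'v) \<Rightarrow> real) \<Rightarrow> real" where
  "strong_equation U a V b (Symmetry x y) h = h (x, y) - h (y, x)"
| "strong_equation U a V b (Marginal_Fst u) h = (\<Sum>v\<in>V. deg (U \<times> V) h (u, v))"
| "strong_equation U a V b (Marginal_Snd v) h = (\<Sum>u\<in>U. deg (U \<times> V) h (u, v))"
| "strong_equation U a V b (Transition_Fst u u' v) h =
     deg U a u * (\<Sum>v'\<in>V. h ((u, v), (u', v'))) - a (u, u') * deg (U \<times> V) h (u, v)"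
| "strong_equation U a V b (Transition_Snd v v' u) h =
     deg V b v * (\<Sum>u'\<in>U. h ((u, v), (u', v'))) - b (v, v') * deg (U \<times> V) h (u, v)"

definition strong_constraints :: "'u set \<Rightarrow> 'v set \<Rightarrow> ('u, 'v) strong_constraint set" where
  "strong_constraints U V =
     case_prod Symmetry ` ((U \<times> V) \<times> (U \<times> V)) \<union> Marginal_Fst ` U \<union> Marginal_Snd ` V
     \<union> (\<lambda>(u, u', v). Transition_Fst u u' v) ` (U \<times> U \<times> V)
     \<union> (\<lambda>(v, v', u). Transition_Snd v v' u) ` (V \<times> V \<times> U)"

lemma strong_solution_iff_constraints:
  "strong_solution U E a V F b h \<longleftrightarrow>
    (\<forall>z. z \<notin> tensor_edges E F \<longrightarrow> h z = 0) \<and>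
    (\<forall>r\<in>strong_constraints U V. strong_equation U a V b r h = 0)"
  unfolding strong_solution_def strong_constraints_def ball_Un Ball_image_comp by (auto simp: o_def)

lemma linear_functional_strong_equation: "linear_functional (strong_equation U a V b r)"
  by (cases r) (simp_all add: linear_functional_def deg_def sum.distrib sum_distrib_left algebra_simps)

lemma polyfun_strong_equation:
  assumes "finite U" "finite V" "\<And>z. (\<lambda>x. A x z) \<in> polyfun I" "\<And>z. (\<lambda>x. B x z) \<in> polyfun I"
  shows "(\<lambda>x. strong_equation U (A x) V (B x) r h) \<in> polyfun I"
  by (cases r) (simp_all add: deg_def assms polyfun_const polyfun_diff polyfun_mult polyfun_sum)

lemma weak_dichotomy:
  assumes GE: "edge_support U E" and GF: "edge_support V F"
  shows "(\<forall>a\<in>Wset U E. \<forall>b\<in>Wset V F. \<not> weakly_disjoint U a V b) \<longleftrightarrow>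
          \<not> (\<exists>A. full_W U E A \<and> (\<forall>a\<in>A. \<exists>B. full_W V F B \<and> (\<forall>b\<in>B. weakly_disjoint U a V b)))"
proof (rule linear_system_dichotomy[OF GE GF])
  have U: "finite U" and V: "finite V"
    using GE GF by (simp_all add: edge_support_def)
  then show "finite (weak_constraints U V)" by (simp add: weak_constraints_def)
  show "finite (Domain E \<times> Domain F)"
    using edge_support.finite_E[OF GE] edge_support.finite_E[OF GF] by (simp add: finite_Domain)
  show "linear_functional (weak_equation U a V b r)" for a b r
    by (rule linear_functional_weak_equation)
  show "(\<lambda>x. weak_equation U (unchart E x) V b r k) \<in> polyfun (coord_edges E)" for b r k
    using U V edge_support.polyfun_unchart[OF GE] by (intro polyfun_weak_equation polyfun_const)
  show "(\<lambda>y. weak_equation U a V (unchart F y) r k) \<in> polyfun (coord_edges F)" for a r k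
    using U V edge_support.polyfun_unchart[OF GF] by (intro polyfun_weak_equation polyfun_const)
  fix a b assume "a \<in> Wset U E" "b \<in> Wset V F"
  with GE GF interpret weighted_pair U E a V F b
    by (simp add: weighted_pair_def weighted_graph_def weighted_graph_axioms_def)
  show "weakly_disjoint U a V b \<longleftrightarrow> (\<forall>k. (\<forall>z. z \<notin> Domain E \<times> Domain F \<longrightarrow> k z = 0) \<and>
      (\<forall>r\<in>weak_constraints U V. weak_equation U a V b r k = 0) \<longrightarrow> (\<forall>z. k z = 0))"
    unfolding weakly_disjoint_iff weak_solution_iff_constraints ..
qed

lemma strong_dichotomy:
  assumes GE: "edge_support U E" and GF: "edge_support V F"
  shows "(\<forall>a\<in>Wset U E. \<forall>b\<in>Wset V F. \<not> strongly_disjoint U a V b) \<longleftrightarrow>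
          \<not> (\<exists>A. full_W U E A \<and> (\<forall>a\<in>A. \<exists>B. full_W V F B \<and> (\<forall>b\<in>B. strongly_disjoint U a V b)))"
proof (rule linear_system_dichotomy[OF GE GF])
  have U: "finite U" and V: "finite V"
    using GE GF by (simp_all add: edge_support_def)
  then show "finite (strong_constraints U V)" by (simp add: strong_constraints_def)
  have "tensor_edges E F \<subseteq> (U \<times> V) \<times> (U \<times> V)"
    using GE GF by (auto simp: edge_support_def tensor_edges_def)
  with U V show "finite (tensor_edges E F)" by (simp add: finite_subset)
  show "linear_functional (strong_equation U a V b r)" for a b r
    by (rule linear_functional_strong_equation)
  show "(\<lambda>x. strong_equation U (unchart E x) V b r h) \<in> polyfun (coord_edges E)" for b r h
    using U V edge_support.polyfun_unchart[OF GE] by (intro polyfun_strong_equation polyfun_const)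
  show "(\<lambda>y. strong_equation U a V (unchart F y) r h) \<in> polyfun (coord_edges F)" for a r h
    using U V edge_support.polyfun_unchart[OF GF] by (intro polyfun_strong_equation polyfun_const)
  fix a b assume "a \<in> Wset U E" "b \<in> Wset V F"
  with GE GF interpret weighted_pair U E a V F b
    by (simp add: weighted_pair_def weighted_graph_def weighted_graph_axioms_def)
  show "strongly_disjoint U a V b \<longleftrightarrow> (\<forall>h. (\<forall>z. z \<notin> tensor_edges E F \<longrightarrow> h z = 0) \<and>
      (\<forall>r\<in>strong_constraints U V. strong_equation U a V b r h = 0) \<longrightarrow> (\<forall>z. h z = 0))"
    unfolding strongly_disjoint_iff strong_solution_iff_constraints ..
qed

theorem proposition6p1:
  fixes U :: "'u set" and V :: "'v set"
    and E :: "('u \<times> 'u) set" and F :: "('v \<times> 'v) set"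
  assumes "finite U" "finite V"
    and "E \<subseteq> U \<times> U" "F \<subseteq> V \<times> V"
    and "sym E" "sym F"
    and "E \<noteq> {}" "F \<noteq> {}"
  shows "((\<forall>a\<in>Wset U E. \<forall>b\<in>Wset V F. \<not> weakly_disjoint U a V b) \<longleftrightarrow>
          \<not> (\<exists>A. full_W U E A \<and>
               (\<forall>a\<in>A. \<exists>B. full_W V F B \<and> (\<forall>b\<in>B. weakly_disjoint U a V b))))
       \<and> ((\<forall>a\<in>Wset U E. \<forall>b\<in>Wset V F. \<not> strongly_disjoint U a V b) \<longleftrightarrow>
          \<not> (\<exists>A. full_W U E A \<and>
               (\<forall>a\<in>A. \<exists>B. full_W V F B \<and> (\<forall>b\<in>B. strongly_disjoint U a V b))))"
proof -
  have "edge_support U E" "edge_support V F"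
    using assms by (simp_all add: edge_support_def)
  then show ?thesis using weak_dichotomy strong_dichotomy by blast
qed

end
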